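(* Fix a material point and let $T>0$. Let $t\mapsto\bm C(t)$, $t\in[0,T]$, be a smooth curve of symmetric positive-definite tensors, and for $\alpha=1,\dots,m$ let $t\mapsto\bm\Gamma^\alpha(t)$ be the solution on $[0,T]$ of $$\eta^\alpha\frac{d\bm\Gamma^\alpha}{dt}=\tilde{\bm S}^\alpha_{\mathrm{iso}}(\tilde{\bm C}(t))-\hat{\bm S}^\alpha_0-\mu^\alpha(\bm\Gamma^\alpha-\bm I)$$ with a given symmetric initial value, where $\tilde{\bm C}(t)=\det(\bm C(t))^{-1/3}\bm C(t)$. For $t_n\in[0,T)$ and $0<\Delta t_n\le T-t_n$ set $\bm C_n:=\bm C(t_n)$, $\bm C_{n+1}:=\bm C(t_n+\Delta t_n)$, $\bm\Gamma^\alpha_n:=\bm\Gamma^\alpha(t_n)$, $\bm\Gamma^\alpha_{n+1}:=\bm\Gamma^\alpha(t_n+\Delta t_n)$, $\bm\Gamma^\alpha_{n+\frac12}:=\frac12(\bm\Gamma^\alpha_n+\bm\Gamma^\alpha_{n+1})$, $\bm C_{n+\frac12}:=\frac12(\bm C_n+\bm C_{n+1})$, $\tilde{\bm C}_k:=\det(\bm C_k)^{-1/3}\bm C_k$, $\bm Z_n:=(\bm C_{n+1}-\bm C_n)/2$, $\bm S_{\mathrm{iso}\,n+\frac12}:=\bm S_{\mathrm{iso}}(\bm C_{n+\frac12},\bm\Gamma^1_{n+\frac12},\dots,\bm\Gamma^m_{n+\frac12})$, and $$\bm S_{\mathrm{iso\,enh2}}:=\frac{G_{\mathrm{iso}}(\tilde{\bm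 C}_{n+1},\bm\Gamma^1_{n+\frac12},\dots,\bm\Gamma^m_{n+\frac12})-G_{\mathrm{iso}}(\tilde{\bm C}_{n},\bm\Gamma^1_{n+\frac12},\dots,\bm\Gamma^m_{n+\frac12})-\bm S_{\mathrm{iso}\,n+\frac12}:\bm Z_n}{|\bm Z_n|^2}\bm Z_n$$ (and $\bm S_{\mathrm{iso\,enh2}}:=\bm 0$ if $\bm Z_n=\bm 0$). Then $\bm S_{\mathrm{iso\,enh2}}$ is asymptotically second order in $\Delta t_n$: there are constants $K>0$ and $\delta>0$, independent of $t_n$ and $\Delta t_n$, such that $|\bm S_{\mathrm{iso\,enh2}}|\le K\Delta t_n^2$ whenever $0<\Delta t_n\le\delta$.
   Context: $|\bm A|=(\bm A:\bm A)^{1/2}$; $\bm I$ the identity tensor. Material model: fix $m\ge1$; for each $\alpha$: $\mu^\alpha>0$, $\eta^\alpha>0$, constant symmetric tensor $\hat{\bm S}^\alpha_0$, smooth scalar function $G^\alpha$ on symmetric positive-definite tensors with $\tilde{\bm S}^\alpha_{\mathrm{iso}}(\tilde{\bm C}):=2\partial G^\alpha/\partial\tilde{\bm C}$; $G^\infty_{\mathrm{iso}}$ smooth. $\Upsilon^\alpha(\tilde{\bm C},\bm\Gamma):=\frac{1}{4\mu^\alpha}|\tilde{\bm S}^\alpha_{\mathrm{iso}}(\tilde{\bm C})-\hat{\bm S}^\alpha_0-\mu^\alpha(\bm\Gamma-\bm I)|^2$; $G_{\mathrm{iso}}(\tilde{\bm C},\bm\Gamma^1,\dots,\bm\Gamma^m):=G^\infty_{\mathrm{iso}}(\tilde{\bm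 C})+\sum_\alpha\Upsilon^\alpha(\tilde{\bm C},\bm\Gamma^\alpha)$. For symmetric positive-definite $\bm C$, with $\tilde{\bm C}=\det(\bm C)^{-1/3}\bm C$ and $\tilde{\bm S}:=2\partial G_{\mathrm{iso}}/\partial\tilde{\bm C}$ (at fixed $\bm\Gamma^\alpha$) evaluated at $(\tilde{\bm C},\bm\Gamma^1,\dots,\bm\Gamma^m)$, the isochoric second Piola–Kirchhoff stress is $\bm S_{\mathrm{iso}}(\bm C,\bm\Gamma^1,\dots,\bm\Gamma^m):=\det(\bm C)^{-1/3}\big(\tilde{\bm S}-\tfrac13(\bm C:\tilde{\bm S})\bm C^{-1}\big)$. *)

theory Defs
  imports "HOL-Analysis.Analysis"
begin

type_synonym tensor = "real^3^3"

definition ddot :: "tensor \<Rightarrow> tensor \<Rightarrow> real" where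
  "ddot A B = (\<Sum>i\<in>UNIV. \<Sum>j\<in>UNIV. A$i$j * B$i$j)"

definition tnorm :: "tensor \<Rightarrow> real" where
  "tnorm A = sqrt (ddot A A)"

definition spd :: "tensor \<Rightarrow> bool" where
  "spd C \<longleftrightarrow> transpose C = C \<and> (\<forall>x::real^3. x \<noteq> 0 \<longrightarrow> x \<bullet> (C *v x) > 0)"

text \<open>D l is the iterated partial derivative along the directions of the list l.\<close>
definition smooth_on :: "'a::euclidean_space set \<Rightarrow> ('a \<Rightarrow> 'b::real_normed_vector) \<Rightarrow> bool" where
  "smooth_on U f \<longleftrightarrow> (\<exists>D :: 'a list \<Rightarrow> 'a \<Rightarrow> 'b. D [] = f \<and>
     (\<forall>l. set l \<subseteq> Basis \<longrightarrow> continuous_on U (D l) \<and>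
        (\<forall>x\<in>U. (D l has_derivative (\<lambda>h. \<Sum>i\<in>Basis. (h \<bullet> i) *\<^sub>R D (i # l) x)) (at x within U))))"

definition Eij :: "3 \<Rightarrow> 3 \<Rightarrow> tensor" where
  "Eij i j = axis i (axis j 1)"

text \<open>Derivative dG/dC of a scalar function with respect to a symmetric tensor argument:
  the symmetric tensor D with DG(C)[H] = D:H for all symmetric H.\<close>
definition sgrad :: "(tensor \<Rightarrow> real) \<Rightarrow> tensor \<Rightarrow> tensor" where
  "sgrad G C = (\<chi> i j. (frechet_derivative G (at C) (Eij i j) + frechet_derivative G (at C) (Eij j i)) / 2)"

definition Ctil :: "tensor \<Rightarrow> tensor" where
  "Ctil C = (det C powr (-1/3)) *\<^sub>R C"

definition Siso_alpha :: "(tensor \<Rightarrow> real) \<Rightarrow> tensor \<Rightarrow> tensor" where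
  "Siso_alpha G Ct = 2 *\<^sub>R sgrad G Ct"

definition Upsilon :: "real \<Rightarrow> tensor \<Rightarrow> (tensor \<Rightarrow> real) \<Rightarrow> tensor \<Rightarrow> tensor \<Rightarrow> real" where
  "Upsilon mu S0 G Ct Gam = 1 / (4 * mu) * (tnorm (Siso_alpha G Ct - S0 - mu *\<^sub>R (Gam - mat 1)))\<^sup>2"

definition Giso :: "nat \<Rightarrow> (nat \<Rightarrow> real) \<Rightarrow> (nat \<Rightarrow> tensor) \<Rightarrow> (nat \<Rightarrow> tensor \<Rightarrow> real)
    \<Rightarrow> (tensor \<Rightarrow> real) \<Rightarrow> tensor \<Rightarrow> (nat \<Rightarrow> tensor) \<Rightarrow> real" where
  "Giso m mu S0 G Ginf Ct Gam = Ginf Ct + (\<Sum>\<alpha>=1..m. Upsilon (mu \<alpha>) (S0 \<alpha>) (G \<alpha>) Ct (Gam \<alpha>))"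

definition Siso :: "nat \<Rightarrow> (nat \<Rightarrow> real) \<Rightarrow> (nat \<Rightarrow> tensor) \<Rightarrow> (nat \<Rightarrow> tensor \<Rightarrow> real)
    \<Rightarrow> (tensor \<Rightarrow> real) \<Rightarrow> tensor \<Rightarrow> (nat \<Rightarrow> tensor) \<Rightarrow> tensor" where
  "Siso m mu S0 G Ginf C Gam =
     (let St = 2 *\<^sub>R sgrad (\<lambda>X. Giso m mu S0 G Ginf X Gam) (Ctil C)
      in (det C powr (-1/3)) *\<^sub>R (St - ((1/3) * ddot C St) *\<^sub>R matrix_inv C))"

definition Senh2 :: "nat \<Rightarrow> (nat \<Rightarrow> real) \<Rightarrow> (nat \<Rightarrow> tensor) \<Rightarrow> (nat \<Rightarrow> tensor \<Rightarrow> real)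
    \<Rightarrow> (tensor \<Rightarrow> real) \<Rightarrow> (real \<Rightarrow> tensor) \<Rightarrow> (nat \<Rightarrow> real \<Rightarrow> tensor) \<Rightarrow> real \<Rightarrow> real \<Rightarrow> tensor" where
  "Senh2 m mu S0 G Ginf C Gam tn dt =
     (let Cn = C tn; Cn1 = C (tn + dt);
          Gh = (\<lambda>\<alpha>. (1/2) *\<^sub>R (Gam \<alpha> tn + Gam \<alpha> (tn + dt)));
          Ch = (1/2) *\<^sub>R (Cn + Cn1);
          Z = (1/2) *\<^sub>R (Cn1 - Cn);
          Sh = Siso m mu S0 G Ginf Ch Gh
      in if Z = 0 then 0
         else ((Giso m mu S0 G Ginf (Ctil Cn1) Gh - Giso m mu S0 G Ginf (Ctil Cn) Gh - ddot Sh Z)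
               / (tnorm Z)\<^sup>2) *\<^sub>R Z)"

end

theory Submission
  imports Defs
begin

text \<open>
  Write X = C_{n+1/2} and Z = (C_{n+1} - C_n)/2, so that C_n = X - Z and C_{n+1} = X + Z, and let
  g(C) = G_iso(Ctilde(C), Gamma_{n+1/2}). By the chain rule 2 Dg(X)[Z] = S_iso(X, Gamma_{n+1/2}) : Z,
  so the numerator of S_iso,enh2 is the error g(X + Z) - g(X - Z) - 2 Dg(X)[Z] of the midpoint rule.
  For a C^3 function this error is O(|Z|^3) on a compact convex set (third-order Taylor expansion along
  the segment from X - Z to X + Z); here that set is the convex hull of the curve C, which consists of
  SPD tensors. Hence |S_iso,enh2| = O(|Z|^2), and |Z| = O(dt) because C is Lipschitz.

  The constant must not depend on Gamma_{n+1/2}. Expanding the squares in Upsilon^alpha shows that g is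
  a fixed smooth function plus a linear combination of the entries of Stilde^alpha_iso(Ctilde(C)) with
  coefficients bounded in terms of a bound for Gamma^alpha on [0, T]. Of the evolution equation only
  this boundedness (i.e. continuity of Gamma^alpha) is used.
\<close>

section \<open>Functions of class C^k\<close>

text \<open>Partial derivatives are taken at x in the whole space, not within U, so that U may be a
  set with empty interior such as the symmetric positive-definite tensors.\<close>
fun Ck_on :: "nat \<Rightarrow> 'a::euclidean_space set \<Rightarrow> ('a \<Rightarrow> real) \<Rightarrow> bool" where
  "Ck_on 0 U f \<longleftrightarrow> continuous_on U f"
| "Ck_on (Suc k) U f \<longleftrightarrow> continuous_on U f \<and> (\<exists>f'. (\<forall>i\<in>Basis. Ck_on k U (f' i)) \<and>
      (\<forall>x\<in>U. (f has_derivative (\<lambda>h. \<Sum>i\<in>Basis. (h \<bullet> i) * f' i x)) (at x)))"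

declare Ck_on.simps(2) [simp del]

lemma Ck_on_SucI:
  assumes "continuous_on U f" "\<And>i. i \<in> Basis \<Longrightarrow> Ck_on k U (f' i)"
    "\<And>x. x \<in> U \<Longrightarrow> (f has_derivative (\<lambda>h. \<Sum>i\<in>Basis. (h \<bullet> i) * f' i x)) (at x)"
  shows "Ck_on (Suc k) U f"
  using assms by (auto simp: Ck_on.simps(2))

lemma Ck_on_SucE:
  assumes "Ck_on (Suc k) U f"
  obtains f' where "continuous_on U f" "\<And>i. i \<in> Basis \<Longrightarrow> Ck_on k U (f' i)"
    "\<And>x. x \<in> U \<Longrightarrow> (f has_derivative (\<lambda>h. \<Sum>i\<in>Basis. (h \<bullet> i) * f' i x)) (at x)"
  using assms by (auto simp: Ck_on.simps(2))

lemma Ck_on_imp_continuous_on: "Ck_on k U f \<Longrightarrow> continuous_on U f"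
  by (cases k) (auto elim: Ck_on_SucE)

lemma Ck_on_SucD: "Ck_on (Suc k) U f \<Longrightarrow> Ck_on k U f"
proof (induction k arbitrary: f)
  case (Suc k)
  then obtain f' where "continuous_on U f" "\<And>i. i \<in> Basis \<Longrightarrow> Ck_on (Suc k) U (f' i)"
    "\<And>x. x \<in> U \<Longrightarrow> (f has_derivative (\<lambda>h. \<Sum>i\<in>Basis. (h \<bullet> i) * f' i x)) (at x)"
    by (elim Ck_on_SucE) blast
  then show ?case by (intro Ck_on_SucI[where f'=f']) (auto intro: Suc.IH)
qed (auto elim: Ck_on_SucE)

lemma Ck_on_imp_differentiable: "Ck_on (Suc k) U f \<Longrightarrow> x \<in> U \<Longrightarrow> f differentiable (at x)"
  by (auto simp: differentiable_def elim!: Ck_on_SucE)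

lemma Ck_on_subset: "Ck_on k U f \<Longrightarrow> T \<subseteq> U \<Longrightarrow> Ck_on k T f"
proof (induction k arbitrary: f)
  case 0
  then show ?case by (simp add: continuous_on_subset[of U f T])
next
  case (Suc k)
  obtain f' where f': "continuous_on U f" "\<And>i. i \<in> Basis \<Longrightarrow> Ck_on k U (f' i)"
    "\<And>x. x \<in> U \<Longrightarrow> (f has_derivative (\<lambda>h. \<Sum>i\<in>Basis. (h \<bullet> i) * f' i x)) (at x)"
    using Suc.prems(1) by (elim Ck_on_SucE) blast
  show ?case
  proof (rule Ck_on_SucI[where f'=f'])
    show "continuous_on T f" using f'(1) Suc.prems(2) by (rule continuous_on_subset)
    show "Ck_on k T (f' i)" if "i \<in> Basis" for i using Suc.IH[OF f'(2)[OF that] Suc.prems(2)] .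
    show "(f has_derivative (\<lambda>h. \<Sum>i\<in>Basis. (h \<bullet> i) * f' i x)) (at x)" if "x \<in> T" for x
      using f'(3) that Suc.prems(2) by blast
  qed
qed

lemma Ck_on_const: "Ck_on k U (\<lambda>x. c)"
  by (induction k arbitrary: c) (auto intro!: Ck_on_SucI[where f'="\<lambda>i x. 0"] continuous_on_const)

lemma Ck_on_add: "Ck_on k U f \<Longrightarrow> Ck_on k U g \<Longrightarrow> Ck_on k U (\<lambda>x. f x + g x)"
proof (induction k arbitrary: f g)
  case (Suc k)
  obtain f' where f': "continuous_on U f" "\<And>i. i \<in> Basis \<Longrightarrow> Ck_on k U (f' i)"
    "\<And>x. x \<in> U \<Longrightarrow> (f has_derivative (\<lambda>h. \<Sum>i\<in>Basis. (h \<bullet> i) * f' i x)) (at x)"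
    using Suc.prems(1) by (elim Ck_on_SucE) blast
  obtain g' where g': "continuous_on U g" "\<And>i. i \<in> Basis \<Longrightarrow> Ck_on k U (g' i)"
    "\<And>x. x \<in> U \<Longrightarrow> (g has_derivative (\<lambda>h. \<Sum>i\<in>Basis. (h \<bullet> i) * g' i x)) (at x)"
    using Suc.prems(2) by (elim Ck_on_SucE) blast
  show ?case
  proof (rule Ck_on_SucI[where f'="\<lambda>i x. f' i x + g' i x"])
    show "continuous_on U (\<lambda>x. f x + g x)" using f'(1) g'(1) by (rule continuous_on_add)
    show "Ck_on k U (\<lambda>x. f' i x + g' i x)" if "i \<in> Basis" for i
      by (rule Suc.IH[OF f'(2)[OF that] g'(2)[OF that]])
    show "((\<lambda>x. f x + g x) has_derivative (\<lambda>h. \<Sum>i\<in>Basis. (h \<bullet> i) * (f' i x + g' i x))) (at x)"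
      if "x \<in> U" for x
      using has_derivative_add[OF f'(3) g'(3), OF that that]
      by (simp add: sum.distrib distrib_left)
  qed
qed (auto intro: continuous_on_add)

lemma Ck_on_mult: "Ck_on k U f \<Longrightarrow> Ck_on k U g \<Longrightarrow> Ck_on k U (\<lambda>x. f x * g x)"
proof (induction k arbitrary: f g)
  case (Suc k)
  obtain f' where f': "continuous_on U f" "\<And>i. i \<in> Basis \<Longrightarrow> Ck_on k U (f' i)"
    "\<And>x. x \<in> U \<Longrightarrow> (f has_derivative (\<lambda>h. \<Sum>i\<in>Basis. (h \<bullet> i) * f' i x)) (at x)"
    using Suc.prems(1) by (elim Ck_on_SucE) blast
  obtain g' where g': "continuous_on U g" "\<And>i. i \<in> Basis \<Longrightarrow> Ck_on k U (g' i)"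
    "\<And>x. x \<in> U \<Longrightarrow> (g has_derivative (\<lambda>h. \<Sum>i\<in>Basis. (h \<bullet> i) * g' i x)) (at x)"
    using Suc.prems(2) by (elim Ck_on_SucE) blast
  have fg: "Ck_on k U f" "Ck_on k U g" using Suc.prems by (simp_all only: Ck_on_SucD)
  show ?case
  proof (rule Ck_on_SucI[where f'="\<lambda>i x. f x * g' i x + f' i x * g x"])
    show "continuous_on U (\<lambda>x. f x * g x)" using f'(1) g'(1) by (rule continuous_on_mult)
    show "Ck_on k U (\<lambda>x. f x * g' i x + f' i x * g x)" if "i \<in> Basis" for i
      using Suc.IH fg f'(2)[OF that] g'(2)[OF that] by (intro Ck_on_add)
    show "((\<lambda>x. f x * g x) has_derivative
        (\<lambda>h. \<Sum>i\<in>Basis. (h \<bullet> i) * (f x * g' i x + f' i x * g x))) (at x)" if "x \<in> U" for x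
      using has_derivative_mult[OF f'(3) g'(3), OF that that]
      by (simp add: sum_distrib_left sum_distrib_right sum.distrib algebra_simps)
  qed
qed (auto intro: continuous_on_mult)

lemma Ck_on_cmult: "Ck_on k U f \<Longrightarrow> Ck_on k U (\<lambda>x. c * f x)"
  using Ck_on_mult[OF Ck_on_const] .

lemma Ck_on_diff: "Ck_on k U f \<Longrightarrow> Ck_on k U g \<Longrightarrow> Ck_on k U (\<lambda>x. f x - g x)"
  using Ck_on_add[OF _ Ck_on_cmult, of k U f g "-1"] by simp

lemma Ck_on_sum:
  "finite A \<Longrightarrow> (\<And>a. a \<in> A \<Longrightarrow> Ck_on k U (f a)) \<Longrightarrow> Ck_on k U (\<lambda>x. \<Sum>a\<in>A. f a x)"
  by (induction A rule: finite_induct) (auto intro: Ck_on_add Ck_on_const)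

lemma Ck_on_inner_left: "Ck_on k U (\<lambda>x. x \<bullet> v)"
proof (cases k)
  case (Suc k')
  have "(\<lambda>h. h \<bullet> v) = (\<lambda>h. \<Sum>i\<in>Basis. (h \<bullet> i) * (i \<bullet> v))"
    by (rule ext) (subst euclidean_inner, simp add: inner_commute)
  then have "((\<lambda>x. x \<bullet> v) has_derivative (\<lambda>h. \<Sum>i\<in>Basis. (h \<bullet> i) * (i \<bullet> v))) (at x)" for x
    using has_derivative_inner_left[OF has_derivative_ident, of v] by simp
  then show ?thesis
    unfolding Suc by (intro Ck_on_SucI[where f'="\<lambda>i x. i \<bullet> v"] continuous_on_inner Ck_on_const)
      (auto intro: continuous_on_id continuous_on_const)
qed (auto intro: continuous_on_inner continuous_on_id continuous_on_const)

lemma Ck_on_cong_open: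
  assumes "open U" "\<And>x. x \<in> U \<Longrightarrow> f x = g x" "Ck_on k U g"
  shows "Ck_on k U f"
proof (cases k)
  case 0
  then show ?thesis using assms continuous_on_cong[OF refl, of U f g] by simp
next
  case (Suc k')
  obtain g' where g': "continuous_on U g" "\<And>i. i \<in> Basis \<Longrightarrow> Ck_on k' U (g' i)"
    "\<And>x. x \<in> U \<Longrightarrow> (g has_derivative (\<lambda>h. \<Sum>i\<in>Basis. (h \<bullet> i) * g' i x)) (at x)"
    using assms(3) unfolding Suc by (elim Ck_on_SucE) blast
  show ?thesis
    unfolding Suc
  proof (rule Ck_on_SucI[OF _ g'(2)])
    show "continuous_on U f" using g'(1) assms(2) continuous_on_cong[OF refl, of U f g] by simp
    show "(f has_derivative (\<lambda>h. \<Sum>i\<in>Basis. (h \<bullet> i) * g' i x)) (at x)" if "x \<in> U" for x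
      using has_derivative_transform_within_open[OF g'(3)[OF that] assms(1) that] assms(2) by simp
  qed
qed

lemma inner_sum_Basis_scaleR:
  fixes c :: "'a::euclidean_space \<Rightarrow> real"
  assumes "j \<in> Basis"
  shows "(\<Sum>b\<in>Basis. c b *\<^sub>R b) \<bullet> j = c j"
proof -
  have "(\<Sum>b\<in>Basis. c b *\<^sub>R b) \<bullet> j = (\<Sum>b\<in>Basis. if b = j then c j else 0)"
    unfolding inner_sum_left by (rule sum.cong) (auto simp: inner_Basis assms)
  then show ?thesis using assms by simp
qed

lemma has_derivative_compose_Basis:
  fixes f :: "'a::euclidean_space \<Rightarrow> 'b::euclidean_space" and g :: "'b \<Rightarrow> real"
  assumes f: "\<And>b. b \<in> Basis \<Longrightarrow> ((\<lambda>x. f x \<bullet> b) has_derivative (\<lambda>h. \<Sum>i\<in>Basis. (h \<bullet> i) * f' b i)) (at x)"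
    and g: "(g has_derivative (\<lambda>h. \<Sum>j\<in>Basis. (h \<bullet> j) * g' j)) (at (f x))"
  shows "((\<lambda>x. g (f x)) has_derivative (\<lambda>h. \<Sum>i\<in>Basis. (h \<bullet> i) * (\<Sum>j\<in>Basis. f' j i * g' j))) (at x)"
proof -
  define F' where "F' h = (\<Sum>b\<in>Basis. (\<Sum>i\<in>Basis. (h \<bullet> i) * f' b i) *\<^sub>R b)" for h
  have F'_inner: "F' h \<bullet> j = (\<Sum>i\<in>Basis. (h \<bullet> i) * f' j i)" if "j \<in> Basis" for h j
    unfolding F'_def by (rule inner_sum_Basis_scaleR[OF that])
  have "(f has_derivative F') (at x)"
    by (rule has_derivative_componentwise_within[THEN iffD2]) (simp add: F'_inner f)
  from has_derivative_compose[OF this g]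
  have "((\<lambda>x. g (f x)) has_derivative (\<lambda>h. \<Sum>j\<in>Basis. (F' h \<bullet> j) * g' j)) (at x)"
    by (simp add: o_def)
  moreover have "(\<Sum>j\<in>Basis. (F' h \<bullet> j) * g' j) = (\<Sum>i\<in>Basis. (h \<bullet> i) * (\<Sum>j\<in>Basis. f' j i * g' j))" for h
  proof -
    have "(\<Sum>j\<in>Basis. (F' h \<bullet> j) * g' j) = (\<Sum>j\<in>Basis. \<Sum>i\<in>Basis. (h \<bullet> i) * (f' j i * g' j))"
      by (rule sum.cong) (simp_all add: F'_inner sum_distrib_right mult.assoc)
    also have "\<dots> = (\<Sum>i\<in>Basis. \<Sum>j\<in>Basis. (h \<bullet> i) * (f' j i * g' j))"
      by (rule sum.swap)
    finally show ?thesis by (simp add: sum_distrib_left)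
  qed
  ultimately show ?thesis by simp
qed

lemma Ck_on_compose:
  fixes g :: "'b::euclidean_space \<Rightarrow> real" and f :: "'a::euclidean_space \<Rightarrow> 'b"
  assumes "Ck_on k V g" "\<And>b. b \<in> Basis \<Longrightarrow> Ck_on k U (\<lambda>x. f x \<bullet> b)" "f ` U \<subseteq> V"
  shows "Ck_on k U (\<lambda>x. g (f x))"
  using assms
proof (induction k arbitrary: g)
  case 0
  have "continuous_on U f" using 0 by (subst continuous_on_componentwise) simp
  with 0 show ?case by (simp add: continuous_on_compose2)
next
  case (Suc k)
  have fc: "continuous_on U f"
    using Suc.prems(2) by (subst continuous_on_componentwise) (blast intro: Ck_on_imp_continuous_on)
  obtain g' where g': "continuous_on V g" "\<And>j. j \<in> Basis \<Longrightarrow> Ck_on k V (g' j)"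
    "\<And>y. y \<in> V \<Longrightarrow> (g has_derivative (\<lambda>h. \<Sum>j\<in>Basis. (h \<bullet> j) * g' j y)) (at y)"
    using Suc.prems(1) by (elim Ck_on_SucE) blast
  have "\<forall>b\<in>Basis. \<exists>fb'. (\<forall>i\<in>Basis. Ck_on k U (fb' i)) \<and>
      (\<forall>x\<in>U. ((\<lambda>x. f x \<bullet> b) has_derivative (\<lambda>h. \<Sum>i\<in>Basis. (h \<bullet> i) * fb' i x)) (at x))"
  proof
    fix b :: 'b assume "b \<in> Basis"
    from Suc.prems(2)[OF this] show "\<exists>fb'. (\<forall>i\<in>Basis. Ck_on k U (fb' i)) \<and>
      (\<forall>x\<in>U. ((\<lambda>x. f x \<bullet> b) has_derivative (\<lambda>h. \<Sum>i\<in>Basis. (h \<bullet> i) * fb' i x)) (at x))"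
      by (elim Ck_on_SucE) blast
  qed
  from bchoice[OF this] obtain f' where f': "\<forall>b\<in>Basis. (\<forall>i\<in>Basis. Ck_on k U (f' b i)) \<and>
      (\<forall>x\<in>U. ((\<lambda>x. f x \<bullet> b) has_derivative (\<lambda>h. \<Sum>i\<in>Basis. (h \<bullet> i) * f' b i x)) (at x))"
    by blast
  show ?case
  proof (rule Ck_on_SucI[where f'="\<lambda>i x. \<Sum>j\<in>Basis. f' j i x * g' j (f x)"])
    show "continuous_on U (\<lambda>x. g (f x))" using g'(1) fc Suc.prems(3) by (rule continuous_on_compose2)
    have "Ck_on k U (\<lambda>x. g' j (f x))" if "j \<in> Basis" for j
      using Suc.IH[OF g'(2)[OF that] Ck_on_SucD[OF Suc.prems(2)] Suc.prems(3)] .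
    then show "Ck_on k U (\<lambda>x. \<Sum>j\<in>Basis. f' j i x * g' j (f x))" if "i \<in> Basis" for i
      using f' that by (intro Ck_on_sum Ck_on_mult) auto
    show "((\<lambda>x. g (f x)) has_derivative
        (\<lambda>h. \<Sum>i\<in>Basis. (h \<bullet> i) * (\<Sum>j\<in>Basis. f' j i x * g' j (f x)))) (at x)" if "x \<in> U" for x
      using f' g'(3) Suc.prems(3) that by (intro has_derivative_compose_Basis) auto
  qed
qed

lemma Ck_on_powr: "Ck_on k {0<..} (\<lambda>y::real. y powr a)"
proof (induction k arbitrary: a)
  case 0
  show ?case by (simp add: continuous_on_powr')
next
  case (Suc k)
  show ?case
  proof (rule Ck_on_SucI[where f'="\<lambda>i y. a * y powr (a - 1)"])
    show "continuous_on {0<..} (\<lambda>y::real. y powr a)"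
      by (simp add: continuous_on_powr')
    show "Ck_on k {0<..} (\<lambda>y. a * y powr (a - 1))" by (rule Ck_on_cmult[OF Suc.IH])
    show "((\<lambda>y. y powr a) has_derivative (\<lambda>h. \<Sum>i\<in>Basis. (h \<bullet> i) * (a * x powr (a - 1)))) (at x)"
      if "x \<in> {0<..}" for x
    proof -
      have "((\<lambda>y. y powr a) has_real_derivative a * x powr (a - 1)) (at x)"
        using that by (auto intro!: derivative_eq_intros)
      then show ?thesis by (simp add: has_field_derivative_def mult_commute_abs)
    qed
  qed
qed

lemma smooth_on_open_partials:
  fixes f :: "'a::euclidean_space \<Rightarrow> real"
  assumes U: "open U" and f: "smooth_on U f"
  obtains D :: "'a list \<Rightarrow> 'a \<Rightarrow> real" where "D [] = f" "\<And>l k. set l \<subseteq> Basis \<Longrightarrow> Ck_on k U (D l)"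
    "\<And>x. x \<in> U \<Longrightarrow> (f has_derivative (\<lambda>h. \<Sum>b\<in>Basis. (h \<bullet> b) * D [b] x)) (at x)"
proof -
  obtain D where D0: "D [] = f" and D: "\<forall>l. set l \<subseteq> Basis \<longrightarrow> continuous_on U (D l) \<and>
        (\<forall>x\<in>U. (D l has_derivative (\<lambda>h. \<Sum>i\<in>Basis. (h \<bullet> i) *\<^sub>R D (i # l) x)) (at x within U))"
    using f unfolding smooth_on_def by (elim exE conjE) (rule that)
  have D': "(D l has_derivative (\<lambda>h. \<Sum>i\<in>Basis. (h \<bullet> i) * D (i # l) x)) (at x)"
    if "set l \<subseteq> Basis" "x \<in> U" for l x
  proof -
    have "(D l has_derivative (\<lambda>h. \<Sum>i\<in>Basis. (h \<bullet> i) *\<^sub>R D (i # l) x)) (at x within U)"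
      using D that by blast
    then show ?thesis unfolding at_within_open[OF that(2) U] by simp
  qed
  have Ck: "Ck_on k U (D l)" if "set l \<subseteq> Basis" for k l
    using that
  proof (induction k arbitrary: l)
    case 0
    then show ?case using D by simp
  next
    case (Suc k)
    show ?case
    proof (rule Ck_on_SucI[where f'="\<lambda>i. D (i # l)"])
      show "continuous_on U (D l)" using D Suc.prems by blast
      show "Ck_on k U (D (i # l))" if "i \<in> Basis" for i
        using Suc.IH[of "i # l"] Suc.prems that by simp
      show "(D l has_derivative (\<lambda>h. \<Sum>i\<in>Basis. (h \<bullet> i) * D (i # l) x)) (at x)" if "x \<in> U" for x
        using D'[OF Suc.prems that] .
    qed
  qed
  have "(f has_derivative (\<lambda>h. \<Sum>b\<in>Basis. (h \<bullet> b) * D [b] x)) (at x)" if "x \<in> U" for x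
    using D'[of "[]" x] D0 that by simp
  with D0 Ck show ?thesis by (rule that)
qed

lemma smooth_on_open_imp_Ck_on:
  fixes f :: "'a::euclidean_space \<Rightarrow> real"
  assumes "open U" "smooth_on U f"
  shows "Ck_on k U f"
proof -
  obtain D :: "'a list \<Rightarrow> 'a \<Rightarrow> real" where "D [] = f" "\<And>l k. set l \<subseteq> Basis \<Longrightarrow> Ck_on k U (D l)"
    using smooth_on_open_partials[OF assms] by blast
  then show ?thesis by force
qed

lemma smooth_on_open_imp_Ck_on_partial:
  fixes f :: "'a::euclidean_space \<Rightarrow> real"
  assumes "open U" "smooth_on U f" "b \<in> Basis"
  shows "Ck_on k U (\<lambda>x. frechet_derivative f (at x) b)"
proof -
  obtain D where D: "\<And>l k. set l \<subseteq> Basis \<Longrightarrow> Ck_on k U (D l)"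
    "\<And>x. x \<in> U \<Longrightarrow> (f has_derivative (\<lambda>h. \<Sum>b'\<in>Basis. (h \<bullet> b') * D [b'] x)) (at x)"
    using smooth_on_open_partials[OF assms(1,2)] by blast
  have "(\<Sum>b'\<in>Basis. (b \<bullet> b') * D [b'] x) = D [b] x" for x
    using inner_sum_Basis_scaleR[OF assms(3), of "\<lambda>b'. D [b'] x"] assms(3)
    by (simp add: inner_sum_left inner_commute)
  then have "\<And>x. x \<in> U \<Longrightarrow> frechet_derivative f (at x) b = D [b] x"
    using frechet_derivative_at[OF D(2), symmetric] by simp
  moreover have "Ck_on k U (D [b])" using D(1)[of "[b]"] assms(3) by simp
  ultimately show ?thesis by (rule Ck_on_cong_open[OF assms(1)])
qed

section \<open>The error of the midpoint rule\<close>

lemma has_real_derivative_along_line: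
  fixes f :: "'a::real_normed_vector \<Rightarrow> real"
  assumes "(f has_derivative f') (at (a + s *\<^sub>R z))"
  shows "((\<lambda>t. f (a + t *\<^sub>R z)) has_real_derivative f' z) (at s)"
proof -
  have "((\<lambda>t. a + t *\<^sub>R z) has_derivative (\<lambda>t. t *\<^sub>R z)) (at s)"
    by (auto intro!: derivative_eq_intros)
  from has_derivative_compose[OF this assms]
  have "((\<lambda>t. f (a + t *\<^sub>R z)) has_derivative (\<lambda>t. f' (t *\<^sub>R z))) (at s)" by (simp add: o_def)
  moreover have "(\<lambda>t. f' (t *\<^sub>R z)) = (*) (f' z)"
    using linear_cmul[OF has_derivative_linear[OF assms]] by (auto simp: mult.commute)
  ultimately show ?thesis by (simp add: has_field_derivative_def)
qed

definition line_derivatives :: "nat \<Rightarrow> 'a::real_normed_vector set \<Rightarrow> 'a \<Rightarrow> (nat \<Rightarrow> 'a \<Rightarrow> real) \<Rightarrow> bool" where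
  "line_derivatives k U z D \<longleftrightarrow> (\<forall>n<k. \<forall>a s. a + s *\<^sub>R z \<in> U \<longrightarrow>
     ((\<lambda>t. D n (a + t *\<^sub>R z)) has_real_derivative D (Suc n) (a + s *\<^sub>R z)) (at s))"

lemma abs_sum_Basis_inner_mult_le:
  fixes z :: "'a::euclidean_space"
  shows "\<bar>\<Sum>i\<in>Basis. (z \<bullet> i) * c i\<bar> \<le> norm z * (\<Sum>i\<in>Basis. \<bar>c i\<bar>)"
proof -
  have "\<bar>\<Sum>i\<in>Basis. (z \<bullet> i) * c i\<bar> \<le> (\<Sum>i\<in>Basis. \<bar>z \<bullet> i\<bar> * \<bar>c i\<bar>)"
    using sum_abs[of "\<lambda>i. (z \<bullet> i) * c i" Basis] by (simp add: abs_mult)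
  also have "\<dots> \<le> (\<Sum>i\<in>Basis. norm z * \<bar>c i\<bar>)"
    by (intro sum_mono mult_right_mono Basis_le_norm) auto
  finally show ?thesis by (simp add: sum_distrib_left)
qed

lemma line_derivatives_Suc:
  assumes f: "\<And>x. x \<in> U \<Longrightarrow> (f has_derivative (\<lambda>h. \<Sum>i\<in>Basis. (h \<bullet> i) * f' i x)) (at x)"
    and D: "\<And>i. i \<in> Basis \<Longrightarrow> D i 0 = f' i \<and> line_derivatives k U z (D i)"
  shows "line_derivatives (Suc k) U z (case_nat f (\<lambda>n y. \<Sum>i\<in>Basis. (z \<bullet> i) * D i n y))"
  unfolding line_derivatives_def
proof (intro allI impI)
  fix n a s assume "n < Suc k" "a + s *\<^sub>R z \<in> U"
  then show "((\<lambda>t. case_nat f (\<lambda>n y. \<Sum>i\<in>Basis. (z \<bullet> i) * D i n y) n (a + t *\<^sub>R z)) has_real_derivative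
      case_nat f (\<lambda>n y. \<Sum>i\<in>Basis. (z \<bullet> i) * D i n y) (Suc n) (a + s *\<^sub>R z)) (at s)"
    using has_real_derivative_along_line[OF f] D
    by (cases n) (auto simp: line_derivatives_def intro!: DERIV_sum DERIV_cmult)
qed

lemma Ck_on_line_derivatives:
  assumes "Ck_on k U f" "compact K" "K \<subseteq> U"
  shows "\<exists>M. \<forall>z. \<exists>D. D 0 = f \<and> line_derivatives k U z D \<and> (\<forall>y\<in>K. \<bar>D k y\<bar> \<le> M * norm z ^ k)"
  using assms(1)
proof (induction k arbitrary: f)
  case 0
  have "bounded (f ` K)"
    using compact_continuous_image[OF continuous_on_subset[OF Ck_on_imp_continuous_on[OF 0] assms(3)] assms(2)]
    by (rule compact_imp_bounded)
  then obtain M where "\<forall>y\<in>K. \<bar>f y\<bar> \<le> M" by (auto simp: bounded_iff)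
  then show ?case by (intro exI[of _ M] allI exI[of _ "\<lambda>_. f"]) (simp add: line_derivatives_def)
next
  case (Suc k)
  obtain f' where f': "\<And>i. i \<in> Basis \<Longrightarrow> Ck_on k U (f' i)"
    "\<And>x. x \<in> U \<Longrightarrow> (f has_derivative (\<lambda>h. \<Sum>i\<in>Basis. (h \<bullet> i) * f' i x)) (at x)"
    using Suc.prems by (elim Ck_on_SucE) blast
  have "\<forall>i\<in>Basis. \<exists>M. \<forall>z. \<exists>D. D 0 = f' i \<and> line_derivatives k U z D \<and> (\<forall>y\<in>K. \<bar>D k y\<bar> \<le> M * norm z ^ k)"
    using Suc.IH[OF f'(1)] by blast
  from bchoice[OF this] obtain M where M: "\<forall>i\<in>Basis. \<forall>z. \<exists>D. D 0 = f' i \<and> line_derivatives k U z D \<and>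
      (\<forall>y\<in>K. \<bar>D k y\<bar> \<le> M i * norm z ^ k)" by blast
  show ?case
  proof (intro exI[of _ "\<Sum>i\<in>Basis. M i"] allI)
    fix z :: 'a
    have "\<forall>i\<in>Basis. \<exists>D. D 0 = f' i \<and> line_derivatives k U z D \<and> (\<forall>y\<in>K. \<bar>D k y\<bar> \<le> M i * norm z ^ k)"
      using M by blast
    from bchoice[OF this] obtain Di where Di: "\<forall>i\<in>Basis. Di i 0 = f' i \<and> line_derivatives k U z (Di i) \<and>
      (\<forall>y\<in>K. \<bar>Di i k y\<bar> \<le> M i * norm z ^ k)" by blast
    define D where "D = case_nat f (\<lambda>n y. \<Sum>i\<in>Basis. (z \<bullet> i) * Di i n y)"
    have "\<bar>D (Suc k) y\<bar> \<le> (\<Sum>i\<in>Basis. M i) * norm z ^ Suc k" if "y \<in> K" for y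
    proof -
      have "\<bar>D (Suc k) y\<bar> \<le> norm z * (\<Sum>i\<in>Basis. \<bar>Di i k y\<bar>)"
        unfolding D_def by (simp add: abs_sum_Basis_inner_mult_le)
      also have "\<dots> \<le> norm z * (\<Sum>i\<in>Basis. M i * norm z ^ k)"
        using Di that by (intro mult_left_mono sum_mono) auto
      finally show ?thesis by (simp add: sum_distrib_right mult_ac)
    qed
    moreover have "line_derivatives (Suc k) U z D"
      unfolding D_def using Di by (intro line_derivatives_Suc[OF f'(2)]) auto
    ultimately show "\<exists>D. D 0 = f \<and> line_derivatives (Suc k) U z D \<and>
        (\<forall>y\<in>K. \<bar>D (Suc k) y\<bar> \<le> (\<Sum>i\<in>Basis. M i) * norm z ^ Suc k)"
      by (intro exI[of _ D]) (simp add: D_def)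
  qed
qed

lemma Taylor_central_difference:
  fixes d :: "nat \<Rightarrow> real \<Rightarrow> real"
  assumes "\<forall>n t. n < 3 \<and> -1 \<le> t \<and> t \<le> 1 \<longrightarrow> DERIV (d n) t :> d (Suc n) t"
    and "\<forall>t. -1 \<le> t \<and> t \<le> 1 \<longrightarrow> \<bar>d 3 t\<bar> \<le> M"
  shows "\<bar>d 0 1 - d 0 (-1) - 2 * d 1 0\<bar> \<le> M / 3"
proof -
  obtain t1 where t1: "0 < t1" "t1 < 1"
    and T1: "d 0 1 = (\<Sum>n<3. d n 0 / fact n * (1 - 0) ^ n) + d 3 t1 / fact 3 * (1 - 0) ^ 3"
    using Taylor[of 3 d "d 0" "-1" 1 0 1] assms(1) by auto
  obtain t2 where t2: "-1 < t2" "t2 < 0"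
    and T2: "d 0 (-1) = (\<Sum>n<3. d n 0 / fact n * (-1 - 0) ^ n) + d 3 t2 / fact 3 * (-1 - 0) ^ 3"
    using Taylor[of 3 d "d 0" "-1" 1 0 "-1"] assms(1) by auto
  have eq: "d 0 1 - d 0 (-1) - 2 * d 1 0 = (d 3 t1 + d 3 t2) / 6"
    unfolding T1 T2 by (simp add: eval_nat_numeral)
  have "\<bar>d 3 t1\<bar> \<le> M" "\<bar>d 3 t2\<bar> \<le> M" using assms(2) t1 t2 by auto
  then have "\<bar>d 3 t1 + d 3 t2\<bar> \<le> 2 * M" using abs_triangle_ineq[of "d 3 t1" "d 3 t2"] by linarith
  then show ?thesis unfolding eq by simp
qed

definition central_remainder :: "('a::real_normed_vector \<Rightarrow> real) \<Rightarrow> 'a \<Rightarrow> 'a \<Rightarrow> real" where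
  "central_remainder f x z = f (x + z) - f (x - z) - 2 * frechet_derivative f (at x) z"

lemma convex_symmetric_segment:
  assumes "convex K" "x - z \<in> K" "x + z \<in> K" "\<bar>s\<bar> \<le> 1"
  shows "x + s *\<^sub>R z \<in> K"
proof -
  have "((1 - s) / 2) *\<^sub>R (x - z) + ((1 + s) / 2) *\<^sub>R (x + z)
      = ((1 - s) / 2 + (1 + s) / 2) *\<^sub>R x + ((1 + s) / 2 - (1 - s) / 2) *\<^sub>R z"
    by (simp add: algebra_simps)
  also have "\<dots> = x + s *\<^sub>R z" by (simp add: field_simps)
  finally have "x + s *\<^sub>R z = ((1 - s) / 2) *\<^sub>R (x - z) + ((1 + s) / 2) *\<^sub>R (x + z)" ..
  also have "\<dots> \<in> K"
    using assms by (intro convexD) (auto simp: field_simps)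
  finally show ?thesis .
qed

lemma Ck_on_3_central_remainder_bound:
  assumes f: "Ck_on 3 U f" and K: "compact K" "convex K" "K \<subseteq> U"
  shows "\<exists>B. \<forall>x z. x - z \<in> K \<longrightarrow> x + z \<in> K \<longrightarrow> \<bar>central_remainder f x z\<bar> \<le> B * norm z ^ 3"
proof -
  obtain M where M: "\<forall>z. \<exists>D. D 0 = f \<and> line_derivatives 3 U z D \<and> (\<forall>y\<in>K. \<bar>D 3 y\<bar> \<le> M * norm z ^ 3)"
    using Ck_on_line_derivatives[OF f K(1,3)] by blast
  have "\<bar>central_remainder f x z\<bar> \<le> M / 3 * norm z ^ 3" if xz: "x - z \<in> K" "x + z \<in> K" for x z
  proof -
    obtain D where D0: "D 0 = f" and D': "line_derivatives 3 U z D"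
      and D3: "\<forall>y\<in>K. \<bar>D 3 y\<bar> \<le> M * norm z ^ 3"
      using M by blast
    have line: "x + t *\<^sub>R z \<in> U" "x + t *\<^sub>R z \<in> K" if "-1 \<le> t" "t \<le> 1" for t
      using convex_symmetric_segment[OF K(2) xz] K(3) that by auto
    have "Ck_on (Suc 2) U f" using f by (simp add: numeral_3_eq_3)
    then have "f differentiable (at x)"
      by (rule Ck_on_imp_differentiable) (use line[of 0] in auto)
    then have "((\<lambda>t. f (x + t *\<^sub>R z)) has_real_derivative frechet_derivative f (at x) z) (at 0)"
      by (intro has_real_derivative_along_line) (simp add: frechet_derivative_works[symmetric])
    moreover have "((\<lambda>t. f (x + t *\<^sub>R z)) has_real_derivative D 1 x) (at 0)"
      using D' line(1)[of 0] D0 unfolding line_derivatives_def by fastforce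
    ultimately have D1: "D 1 x = frechet_derivative f (at x) z"
      by (rule DERIV_unique[rotated])
    have "\<forall>n t. n < 3 \<and> -1 \<le> t \<and> t \<le> 1 \<longrightarrow>
        ((\<lambda>t. D n (x + t *\<^sub>R z)) has_real_derivative D (Suc n) (x + t *\<^sub>R z)) (at t)"
      using D' line(1) unfolding line_derivatives_def by blast
    moreover have "\<forall>t. -1 \<le> t \<and> t \<le> 1 \<longrightarrow> \<bar>D 3 (x + t *\<^sub>R z)\<bar> \<le> M * norm z ^ 3"
      using D3 line(2) by blast
    ultimately have "\<bar>D 0 (x + 1 *\<^sub>R z) - D 0 (x + (-1) *\<^sub>R z) - 2 * D 1 (x + 0 *\<^sub>R z)\<bar>
        \<le> M * norm z ^ 3 / 3"
      by (rule Taylor_central_difference[of "\<lambda>n t. D n (x + t *\<^sub>R z)"])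
    then show ?thesis using D0 D1 by (simp add: central_remainder_def)
  qed
  then show ?thesis by blast
qed

lemma central_remainder_lincomb:
  fixes P :: "'a::real_normed_vector \<Rightarrow> real" and Q :: "'i \<Rightarrow> 'a \<Rightarrow> real"
  assumes "finite I" "P differentiable (at x)" "\<And>p. p \<in> I \<Longrightarrow> Q p differentiable (at x)"
  shows "central_remainder (\<lambda>X. P X + (\<Sum>p\<in>I. c p * Q p X) + k) x z
    = central_remainder P x z + (\<Sum>p\<in>I. c p * central_remainder (Q p) x z)"
proof -
  let ?P' = "frechet_derivative P (at x)" and ?Q' = "\<lambda>p. frechet_derivative (Q p) (at x)"
  have "((\<lambda>X. P X + (\<Sum>p\<in>I. c p * Q p X) + k) has_derivative
      (\<lambda>h. ?P' h + (\<Sum>p\<in>I. c p * ?Q' p h) + 0)) (at x)"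
    using assms(2,3) unfolding frechet_derivative_works
    by (intro has_derivative_add has_derivative_sum has_derivative_mult_right has_derivative_const) auto
  then have fd: "frechet_derivative (\<lambda>X. P X + (\<Sum>p\<in>I. c p * Q p X) + k) (at x) z
      = ?P' z + (\<Sum>p\<in>I. c p * ?Q' p z)"
    by (simp add: frechet_derivative_at[symmetric])
  have "(\<Sum>p\<in>I. c p * central_remainder (Q p) x z)
      = (\<Sum>p\<in>I. c p * Q p (x + z) - c p * Q p (x - z) - 2 * (c p * ?Q' p z))"
    unfolding central_remainder_def by (rule sum.cong) (simp_all add: algebra_simps)
  also have "\<dots> = (\<Sum>p\<in>I. c p * Q p (x + z)) - (\<Sum>p\<in>I. c p * Q p (x - z)) - 2 * (\<Sum>p\<in>I. c p * ?Q' p z)"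
    by (simp add: sum_subtractf sum_distrib_left)
  finally show ?thesis unfolding central_remainder_def fd by simp
qed

lemma Ck_on_3_central_remainder_bound_uniform:
  fixes F :: "'i \<Rightarrow> 'a::euclidean_space \<Rightarrow> real"
  assumes I: "finite I" and F: "\<And>p. p \<in> I \<Longrightarrow> Ck_on 3 U (F p)"
    and K: "compact K" "convex K" "K \<subseteq> U"
  shows "\<exists>B. \<forall>p\<in>I. \<forall>x z. x - z \<in> K \<longrightarrow> x + z \<in> K \<longrightarrow> \<bar>central_remainder (F p) x z\<bar> \<le> B * norm z ^ 3"
proof -
  have "\<forall>p\<in>I. \<exists>B. \<forall>x z. x - z \<in> K \<longrightarrow> x + z \<in> K \<longrightarrow> \<bar>central_remainder (F p) x z\<bar> \<le> B * norm z ^ 3"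
    using Ck_on_3_central_remainder_bound[OF F K] by blast
  from bchoice[OF this] obtain B where B: "\<forall>p\<in>I. \<forall>x z. x - z \<in> K \<longrightarrow> x + z \<in> K \<longrightarrow>
      \<bar>central_remainder (F p) x z\<bar> \<le> B p * norm z ^ 3"
    by blast
  have le: "B p * norm z ^ 3 \<le> (\<Sum>q\<in>I. \<bar>B q\<bar>) * norm z ^ 3" if "p \<in> I" for p and z :: 'a
    using member_le_sum[OF that _ I, of "\<lambda>q. \<bar>B q\<bar>"] by (intro mult_right_mono) auto
  show ?thesis
  proof (intro exI[of _ "\<Sum>q\<in>I. \<bar>B q\<bar>"] ballI allI impI)
    fix p x z assume "p \<in> I" "x - z \<in> K" "x + z \<in> K"
    then show "\<bar>central_remainder (F p) x z\<bar> \<le> (\<Sum>q\<in>I. \<bar>B q\<bar>) * norm z ^ 3"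
      using order_trans[OF B[rule_format] le] by blast
  qed
qed

lemma central_remainder_lincomb_bound:
  fixes P :: "'a::euclidean_space \<Rightarrow> real" and Q :: "'i \<Rightarrow> 'a \<Rightarrow> real"
  assumes I: "finite I" and P: "Ck_on 3 U P" and Q: "\<And>p. p \<in> I \<Longrightarrow> Ck_on 3 U (Q p)"
    and K: "compact K" "convex K" "K \<subseteq> U"
  shows "\<exists>B. \<forall>c k x z. (\<forall>p\<in>I. \<bar>c p\<bar> \<le> Cb p) \<longrightarrow> x - z \<in> K \<longrightarrow> x + z \<in> K \<longrightarrow>
    \<bar>central_remainder (\<lambda>X. P X + (\<Sum>p\<in>I. c p * Q p X) + k) x z\<bar> \<le> B * norm z ^ 3"
proof -
  obtain BP where BP: "\<forall>x z. x - z \<in> K \<longrightarrow> x + z \<in> K \<longrightarrow> \<bar>central_remainder P x z\<bar> \<le> BP * norm z ^ 3"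
    using Ck_on_3_central_remainder_bound[OF P K] by blast
  obtain BQ where BQ: "\<forall>p\<in>I. \<forall>x z. x - z \<in> K \<longrightarrow> x + z \<in> K \<longrightarrow>
      \<bar>central_remainder (Q p) x z\<bar> \<le> BQ * norm z ^ 3"
    using Ck_on_3_central_remainder_bound_uniform[where F=Q, OF I Q K] by blast
  show ?thesis
  proof (intro exI[of _ "BP + (\<Sum>p\<in>I. \<bar>Cb p\<bar>) * BQ"] allI impI)
    fix c k x z assume c: "\<forall>p\<in>I. \<bar>c p\<bar> \<le> Cb p" and xz: "x - z \<in> K" "x + z \<in> K"
    let ?R = "\<lambda>f. central_remainder f x z"
    have "x \<in> U" using convex_symmetric_segment[OF K(2) xz, of 0] K(3) by auto
    then have diff: "f differentiable (at x)" if "Ck_on 3 U f" for f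
      using Ck_on_imp_differentiable[of 2 U f x] that by (simp add: numeral_3_eq_3)
    have "\<bar>?R (\<lambda>X. P X + (\<Sum>p\<in>I. c p * Q p X) + k)\<bar> = \<bar>?R P + (\<Sum>p\<in>I. c p * ?R (Q p))\<bar>"
      using central_remainder_lincomb[OF I diff[OF P] diff[OF Q]] by simp
    also have "\<dots> \<le> \<bar>?R P\<bar> + (\<Sum>p\<in>I. \<bar>c p\<bar> * \<bar>?R (Q p)\<bar>)"
    proof -
      have "\<bar>\<Sum>p\<in>I. c p * ?R (Q p)\<bar> \<le> (\<Sum>p\<in>I. \<bar>c p\<bar> * \<bar>?R (Q p)\<bar>)"
        using sum_abs[of "\<lambda>p. c p * ?R (Q p)" I] by (simp add: abs_mult)
      then show ?thesis using abs_triangle_ineq[of "?R P" "\<Sum>p\<in>I. c p * ?R (Q p)"] by linarith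
    qed
    also have "\<dots> \<le> BP * norm z ^ 3 + (\<Sum>p\<in>I. \<bar>Cb p\<bar> * (BQ * norm z ^ 3))"
      using BP BQ c xz by (intro add_mono sum_mono mult_mono) force+
    also have "\<dots> = (BP + (\<Sum>p\<in>I. \<bar>Cb p\<bar>) * BQ) * norm z ^ 3"
      by (simp add: sum_distrib_left sum_distrib_right algebra_simps)
    finally show "\<bar>?R (\<lambda>X. P X + (\<Sum>p\<in>I. c p * Q p X) + k)\<bar> \<le> (BP + (\<Sum>p\<in>I. \<bar>Cb p\<bar>) * BQ) * norm z ^ 3" .
  qed
qed

section \<open>Symmetric positive-definite tensors\<close>

lemma ddot_eq_inner: "ddot A B = A \<bullet> B"
  by (simp add: ddot_def inner_vec_def)

lemma tnorm_eq_norm: "tnorm A = norm A"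
  by (simp add: tnorm_def ddot_eq_inner norm_eq_sqrt_inner)

lemma Eij_in_Basis: "Eij i j \<in> Basis"
  unfolding Eij_def Basis_vec_def by auto

lemma tensor_Basis_eq_Eij: "(b::tensor) \<in> Basis \<Longrightarrow> \<exists>i j. b = Eij i j"
  unfolding Eij_def Basis_vec_def by auto

lemma inner_Eij: "(X::tensor) \<bullet> Eij i j = X$i$j"
  by (simp add: Eij_def inner_axis)

lemma Eij_nth: "Eij i j $ a $ b = (if a = i \<and> b = j then 1 else 0)"
  by (simp add: Eij_def axis_def)

lemma tensor_eq_sum_Eij: "(X::tensor) = (\<Sum>i\<in>UNIV. \<Sum>j\<in>UNIV. X$i$j *\<^sub>R Eij i j)"
  by (simp add: vec_eq_iff forall_3 sum_3 Eij_nth)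

lemma abs_tensor_nth_le_norm: "\<bar>(X::tensor)$i$j\<bar> \<le> norm X"
  by (rule order_trans[OF component_le_norm_cart Finite_Cartesian_Product.norm_nth_le])

lemma symmetric_tensor_nth: "transpose (X::tensor) = X \<Longrightarrow> X$j$i = X$i$j"
  by (drule arg_cong[where f="\<lambda>A. A $ i $ j"]) (simp add: transpose_def)

lemma inner_transpose_left: "transpose (A::tensor) \<bullet> B = A \<bullet> transpose B"
  unfolding inner_vec_def transpose_def by simp (rule sum.swap)

lemma Ck_on_tensor_nth: "Ck_on k U (\<lambda>X::tensor. X$i$j)"
  using Ck_on_inner_left[of k U "Eij i j"] by (simp add: inner_Eij)

lemma Ck_on_det: "Ck_on k U (\<lambda>X::tensor. det X)"
  unfolding det_3 by (intro Ck_on_add Ck_on_diff Ck_on_mult Ck_on_tensor_nth)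

lemma spd_scaleR: "spd C \<Longrightarrow> c > 0 \<Longrightarrow> spd (c *\<^sub>R C)"
  unfolding spd_def by (auto simp: transpose_scalar scaleR_matrix_vector_assoc[symmetric])

lemma convex_spd: "convex {X. spd X}"
proof (rule convexI)
  fix A B :: tensor and u v :: real
  assume A: "A \<in> {X. spd X}" and B: "B \<in> {X. spd X}" and uv: "0 \<le> u" "0 \<le> v" "u + v = 1"
  have "transpose (u *\<^sub>R A + v *\<^sub>R B) = u *\<^sub>R A + v *\<^sub>R B"
    using A B by (simp add: spd_def transpose_def vec_eq_iff)
  moreover have "x \<bullet> ((u *\<^sub>R A + v *\<^sub>R B) *v x) > 0" if "x \<noteq> 0" for x
  proof -
    have a: "x \<bullet> (A *v x) > 0" and b: "x \<bullet> (B *v x) > 0" using A B that by (auto simp: spd_def)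
    have eq: "x \<bullet> ((u *\<^sub>R A + v *\<^sub>R B) *v x) = u * (x \<bullet> (A *v x)) + v * (x \<bullet> (B *v x))"
      by (simp add: matrix_vector_mult_add_rdistrib scaleR_matrix_vector_assoc[symmetric] inner_add_right)
    show ?thesis
    proof (cases "u = 0")
      case True
      then show ?thesis using uv b eq by simp
    next
      case False
      then have "u * (x \<bullet> (A *v x)) > 0" "v * (x \<bullet> (B *v x)) \<ge> 0" using uv a b by simp_all
      with eq show ?thesis by linarith
    qed
  qed
  ultimately show "u *\<^sub>R A + v *\<^sub>R B \<in> {X. spd X}" by (simp add: spd_def)
qed

lemma spd_det_nonzero:
  assumes "spd C"
  shows "det (C::tensor) \<noteq> 0"
proof -
  have "inj ((*v) C)"
  proof (rule injI)
    fix x y assume "C *v x = C *v y"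
    then have "(x - y) \<bullet> (C *v (x - y)) = 0" by (simp add: matrix_vector_mult_diff_distrib)
    show "x = y"
    proof (rule ccontr)
      assume "x \<noteq> y"
      then have "(x - y) \<bullet> (C *v (x - y)) > 0" using assms unfolding spd_def by simp
      with \<open>(x - y) \<bullet> (C *v (x - y)) = 0\<close> show False by simp
    qed
  qed
  then show ?thesis using det_nz_iff_inj[of "(*v) C"] by simp
qed

lemma spd_det_pos: "spd C \<Longrightarrow> det (C::tensor) > 0"
proof (rule ccontr)
  assume C: "spd C" and "\<not> det C > 0"
  define p where "p t = det ((1 - t) *\<^sub>R mat 1 + t *\<^sub>R C)" for t :: real
  have "continuous_on {0..1} (\<lambda>t::real. (1 - t) *\<^sub>R mat 1 + t *\<^sub>R C)"
    by (intro continuous_intros)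
  then have "continuous_on {0..1} p"
    unfolding p_def by (rule continuous_on_compose2[OF Ck_on_imp_continuous_on[OF Ck_on_det]]) auto
  moreover have "p 1 \<le> 0" "0 \<le> p 0" using \<open>\<not> det C > 0\<close> by (auto simp: p_def)
  ultimately obtain t where t: "0 \<le> t" "t \<le> 1" "p t = 0" using IVT2'[of p 1 0 0] by auto
  have "spd (mat 1)" by (simp add: spd_def)
  then have "spd ((1 - t) *\<^sub>R mat 1 + t *\<^sub>R C)"
    using convexD[OF convex_spd, of "mat 1" C "1 - t" t] C t by auto
  then show False using spd_det_nonzero t(3) p_def by auto
qed

lemma spd_Ctil: "spd C \<Longrightarrow> spd (Ctil C)"
  unfolding Ctil_def by (intro spd_scaleR) (auto dest: spd_det_pos)

lemma Ck_on_comp_Ctil: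
  assumes "Ck_on k {X. spd X} h"
  shows "Ck_on k {X. spd X} (\<lambda>X. h (Ctil X))"
proof (rule Ck_on_compose[OF assms])
  show "Ctil ` {X. spd X} \<subseteq> {X. spd X}" using spd_Ctil by auto
  have "Ck_on k {X::tensor. spd X} (\<lambda>X. det X powr (-1/3))"
    by (rule Ck_on_compose[OF Ck_on_powr]) (auto simp: Ck_on_det spd_det_pos)
  then have "Ck_on k {X. spd X} (\<lambda>X. det X powr (-1/3) * X $ i $ j)" for i j
    by (rule Ck_on_mult[OF _ Ck_on_tensor_nth])
  then show "Ck_on k {X. spd X} (\<lambda>X. Ctil X \<bullet> b)" if "b \<in> Basis" for b
    using tensor_Basis_eq_Eij[OF that] by (auto simp: inner_Eij Ctil_def)
qed

section \<open>The derivative of the isochoric part\<close>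

definition adjugate3 :: "tensor \<Rightarrow> tensor" where
  "adjugate3 A = vector [
     vector [A$2$2*A$3$3 - A$2$3*A$3$2, A$1$3*A$3$2 - A$1$2*A$3$3, A$1$2*A$2$3 - A$1$3*A$2$2],
     vector [A$2$3*A$3$1 - A$2$1*A$3$3, A$1$1*A$3$3 - A$1$3*A$3$1, A$1$3*A$2$1 - A$1$1*A$2$3],
     vector [A$2$1*A$3$2 - A$2$2*A$3$1, A$1$2*A$3$1 - A$1$1*A$3$2, A$1$1*A$2$2 - A$1$2*A$2$1]]"

lemma adjugate3_nth:
  "adjugate3 A $ i $ j =
    (if i = 1 then (if j = 1 then A$2$2*A$3$3 - A$2$3*A$3$2 else if j = 2 then A$1$3*A$3$2 - A$1$2*A$3$3
                    else A$1$2*A$2$3 - A$1$3*A$2$2)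
     else if i = 2 then (if j = 1 then A$2$3*A$3$1 - A$2$1*A$3$3 else if j = 2 then A$1$1*A$3$3 - A$1$3*A$3$1
                    else A$1$3*A$2$1 - A$1$1*A$2$3)
     else (if j = 1 then A$2$1*A$3$2 - A$2$2*A$3$1 else if j = 2 then A$1$2*A$3$1 - A$1$1*A$3$2
                    else A$1$1*A$2$2 - A$1$2*A$2$1))"
  using exhaust_3[of i] exhaust_3[of j] unfolding adjugate3_def by auto

lemma matrix_mul_adjugate3: "A ** adjugate3 A = det A *\<^sub>R mat 1"
  unfolding vec_eq_iff matrix_matrix_mult_def
  by (simp add: forall_3 sum_3 adjugate3_nth det_3 mat_def algebra_simps)

lemma adjugate3_matrix_mul: "adjugate3 A ** A = det A *\<^sub>R mat 1"
  unfolding vec_eq_iff matrix_matrix_mult_def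
  by (simp add: forall_3 sum_3 adjugate3_nth det_3 mat_def algebra_simps)

lemma matrix_inv_eq_adjugate3:
  assumes "det (A::tensor) \<noteq> 0"
  shows "matrix_inv A = (1 / det A) *\<^sub>R adjugate3 A"
proof -
  let ?M = "(1 / det A) *\<^sub>R adjugate3 A"
  have scaleR_mult: "(c *\<^sub>R X) ** Y = c *\<^sub>R (X ** Y)" "X ** (c *\<^sub>R Y) = c *\<^sub>R (X ** Y)" for c and X Y :: tensor
    by (simp_all add: vec_eq_iff matrix_matrix_mult_def sum_distrib_left mult_ac)
  have M: "A ** ?M = mat 1 \<and> ?M ** A = mat 1"
    using assms by (simp add: scaleR_mult matrix_mul_adjugate3 adjugate3_matrix_mul)
  then have inv: "A ** matrix_inv A = mat 1 \<and> matrix_inv A ** A = mat 1"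
    unfolding matrix_inv_def by (rule someI)
  have "matrix_inv A = matrix_inv A ** (A ** ?M)" using M by simp
  also have "\<dots> = (matrix_inv A ** A) ** ?M" by (simp add: matrix_mul_assoc)
  also have "\<dots> = ?M" using inv by simp
  finally show ?thesis .
qed

lemma has_derivative_tensor_nth [derivative_intros]:
  "((\<lambda>X::tensor. X$i$j) has_derivative (\<lambda>H. H$i$j)) F"
  by (rule bounded_linear_imp_has_derivative)
     (rule bounded_linear_compose[OF bounded_linear_vec_nth bounded_linear_vec_nth])

lemma has_derivative_det3:
  "((\<lambda>X::tensor. det X) has_derivative (\<lambda>H. transpose (adjugate3 C) \<bullet> H)) (at C)"
  unfolding det_3
  by (rule has_derivative_eq_rhs, (rule derivative_intros)+, rule ext)
    (simp add: inner_vec_def sum_3 transpose_def adjugate3_nth algebra_simps)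

lemma has_derivative_Ctil:
  fixes C :: tensor
  assumes "det C > 0"
  shows "(Ctil has_derivative (\<lambda>H. det C powr (-1/3) *\<^sub>R H -
      ((1/3) * det C powr (-1/3) * (transpose (matrix_inv C) \<bullet> H)) *\<^sub>R C)) (at C)"
proof -
  have "((\<lambda>y. y powr (-1/3)) has_real_derivative (-1/3) * det C powr (-1/3 - 1)) (at (det C))"
    using assms by (auto intro!: derivative_eq_intros)
  from has_derivative_compose[OF has_derivative_det3[of C] this[unfolded has_field_derivative_def]]
  have "((\<lambda>X. det X powr (-1/3)) has_derivative
      (\<lambda>H. (-1/3) * det C powr (-1/3 - 1) * (transpose (adjugate3 C) \<bullet> H))) (at C)"
    by (simp add: o_def mult_ac)
  moreover have "det C powr (-1/3 - 1) = det C powr (-1/3) / det C"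
    unfolding powr_diff using assms by simp
  then have "(\<lambda>H. (-1/3) * det C powr (-1/3 - 1) * (transpose (adjugate3 C) \<bullet> H))
      = (\<lambda>H. - ((1/3) * det C powr (-1/3) * (transpose (matrix_inv C) \<bullet> H)))"
    using assms by (simp add: matrix_inv_eq_adjugate3 transpose_scalar)
  ultimately have "((\<lambda>X. det X powr (-1/3)) has_derivative
      (\<lambda>H. - ((1/3) * det C powr (-1/3) * (transpose (matrix_inv C) \<bullet> H)))) (at C)"
    by simp
  from has_derivative_scaleR[OF this has_derivative_ident]
  show ?thesis unfolding Ctil_def[abs_def] by (simp add: algebra_simps)
qed

lemma inner_sgrad_symmetric:
  assumes g: "(g has_derivative g') (at Y)" and X: "transpose X = X"
  shows "sgrad g Y \<bullet> X = g' X"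
proof -
  have lin: "linear g'" using has_derivative_linear[OF g] .
  have swap: "(\<Sum>i\<in>UNIV. \<Sum>j\<in>UNIV. g' (Eij j i) * X$i$j) = (\<Sum>i\<in>UNIV. \<Sum>j\<in>UNIV. g' (Eij i j) * X$i$j)"
  proof -
    have "(\<Sum>i\<in>UNIV. \<Sum>j\<in>UNIV. g' (Eij j i) * X$i$j) = (\<Sum>j\<in>UNIV. \<Sum>i\<in>UNIV. g' (Eij j i) * X$i$j)"
      by (rule sum.swap)
    then show ?thesis using symmetric_tensor_nth[OF X] by simp
  qed
  have "sgrad g Y \<bullet> X = (\<Sum>i\<in>UNIV. \<Sum>j\<in>UNIV. (g' (Eij i j) + g' (Eij j i)) / 2 * X$i$j)"
    by (simp add: sgrad_def inner_vec_def frechet_derivative_at[OF g, symmetric])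
  also have "\<dots> = ((\<Sum>i\<in>UNIV. \<Sum>j\<in>UNIV. g' (Eij i j) * X$i$j) + (\<Sum>i\<in>UNIV. \<Sum>j\<in>UNIV. g' (Eij j i) * X$i$j)) / 2"
    by (simp add: sum_3 field_simps)
  also have "\<dots> = (\<Sum>i\<in>UNIV. \<Sum>j\<in>UNIV. X$i$j * g' (Eij i j))"
    unfolding swap by (simp add: mult.commute)
  also have "\<dots> = g' X"
    using arg_cong[OF tensor_eq_sum_Eij[of X], of g'] by (simp add: linear_sum[OF lin] linear_scale[OF lin])
  finally show ?thesis .
qed

text \<open>The chain rule behind the definition of Siso: on symmetric directions, Siso C is twice the
  derivative of C \<mapsto> G_iso (Ctil C).\<close>
lemma frechet_derivative_comp_Ctil:
  assumes C: "spd C" and Z: "transpose Z = Z" and g: "(g has_derivative g') (at (Ctil C))"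
  shows "2 * frechet_derivative (\<lambda>X. g (Ctil X)) (at C) Z =
    ddot (det C powr (-1/3) *\<^sub>R (2 *\<^sub>R sgrad g (Ctil C)
      - ((1/3) * ddot C (2 *\<^sub>R sgrad g (Ctil C))) *\<^sub>R matrix_inv C)) Z"
proof -
  define d where "d = det C powr (-1/3)"
  define DC where "DC H = d *\<^sub>R H - ((1/3) * d * (transpose (matrix_inv C) \<bullet> H)) *\<^sub>R C" for H
  have Cs: "transpose C = C" using C by (simp add: spd_def)
  have "((\<lambda>X. g (Ctil X)) has_derivative (\<lambda>H. g' (DC H))) (at C)"
    using has_derivative_compose[OF has_derivative_Ctil[OF spd_det_pos[OF C]] g]
    unfolding DC_def d_def by (simp add: o_def)
  then have "frechet_derivative (\<lambda>X. g (Ctil X)) (at C) Z = g' (DC Z)"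
    by (simp add: frechet_derivative_at[symmetric])
  also have "\<dots> = sgrad g (Ctil C) \<bullet> DC Z"
    using Z Cs by (intro inner_sgrad_symmetric[OF g, symmetric]) (simp add: DC_def transpose_def vec_eq_iff)
  finally have "2 * frechet_derivative (\<lambda>X. g (Ctil X)) (at C) Z
      = 2 * d * (sgrad g (Ctil C) \<bullet> Z) - (2/3) * d * (matrix_inv C \<bullet> Z) * (sgrad g (Ctil C) \<bullet> C)"
    using Z by (simp add: DC_def inner_transpose_left algebra_simps)
  also have "\<dots> = ddot (d *\<^sub>R (2 *\<^sub>R sgrad g (Ctil C)
      - ((1/3) * ddot C (2 *\<^sub>R sgrad g (Ctil C))) *\<^sub>R matrix_inv C)) Z"
    by (simp add: ddot_eq_inner inner_commute algebra_simps)
  finally show ?thesis unfolding d_def .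
qed

section \<open>The isochoric energy and the enhanced stress\<close>

text \<open>Gamma enters only through the coefficients of a fixed family of functions of Y; this is what
  makes the remainder bound uniform in Gamma.\<close>
lemma Giso_eq_lincomb:
  "Giso m mu S0 G Ginf Y Gam =
     (Ginf Y + (\<Sum>\<alpha>=1..m. 1 / (4 * mu \<alpha>) * (Siso_alpha (G \<alpha>) Y \<bullet> Siso_alpha (G \<alpha>) Y)))
     + (\<Sum>(\<alpha>, i, j)\<in>{1..m} \<times> UNIV \<times> UNIV.
          - ((S0 \<alpha> + mu \<alpha> *\<^sub>R (Gam \<alpha> - mat 1)) $ i $ j / (2 * mu \<alpha>)) * Siso_alpha (G \<alpha>) Y $ i $ j)
     + (\<Sum>\<alpha>=1..m. 1 / (4 * mu \<alpha>) * (norm (S0 \<alpha> + mu \<alpha> *\<^sub>R (Gam \<alpha> - mat 1)))\<^sup>2)"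
proof -
  define A where "A \<alpha> = Siso_alpha (G \<alpha>) Y" for \<alpha>
  define B where "B \<alpha> = S0 \<alpha> + mu \<alpha> *\<^sub>R (Gam \<alpha> - mat 1)" for \<alpha>
  have Ups: "Upsilon (mu \<alpha>) (S0 \<alpha>) (G \<alpha>) Y (Gam \<alpha>) = 1 / (4 * mu \<alpha>) * (A \<alpha> \<bullet> A \<alpha>)
      + (\<Sum>i\<in>UNIV. \<Sum>j\<in>UNIV. - (B \<alpha> $ i $ j / (2 * mu \<alpha>)) * A \<alpha> $ i $ j)
      + 1 / (4 * mu \<alpha>) * (norm (B \<alpha>))\<^sup>2" for \<alpha>
  proof -
    have "Upsilon (mu \<alpha>) (S0 \<alpha>) (G \<alpha>) Y (Gam \<alpha>) = 1 / (4 * mu \<alpha>) * (norm (A \<alpha> - B \<alpha>))\<^sup>2"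
      by (simp add: Upsilon_def tnorm_eq_norm A_def B_def diff_diff_eq)
    also have "(norm (A \<alpha> - B \<alpha>))\<^sup>2 = A \<alpha> \<bullet> A \<alpha> - 2 * (\<Sum>i\<in>UNIV. \<Sum>j\<in>UNIV. B \<alpha> $ i $ j * A \<alpha> $ i $ j)
        + (norm (B \<alpha>))\<^sup>2"
    proof -
      have "A \<alpha> \<bullet> B \<alpha> = (\<Sum>i\<in>UNIV. \<Sum>j\<in>UNIV. B \<alpha> $ i $ j * A \<alpha> $ i $ j)"
        by (simp add: inner_vec_def mult.commute)
      moreover have "(norm (A \<alpha> - B \<alpha>))\<^sup>2 = A \<alpha> \<bullet> A \<alpha> - 2 * (A \<alpha> \<bullet> B \<alpha>) + B \<alpha> \<bullet> B \<alpha>"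
        by (simp add: power2_norm_eq_inner inner_diff_left inner_diff_right inner_commute)
      ultimately show ?thesis by (simp add: power2_norm_eq_inner)
    qed
    also have "1 / (4 * mu \<alpha>) * (A \<alpha> \<bullet> A \<alpha> - 2 * (\<Sum>i\<in>UNIV. \<Sum>j\<in>UNIV. B \<alpha> $ i $ j * A \<alpha> $ i $ j)
        + (norm (B \<alpha>))\<^sup>2) = 1 / (4 * mu \<alpha>) * (A \<alpha> \<bullet> A \<alpha>)
        - 1 / (4 * mu \<alpha>) * (2 * (\<Sum>i\<in>UNIV. \<Sum>j\<in>UNIV. B \<alpha> $ i $ j * A \<alpha> $ i $ j))
        + 1 / (4 * mu \<alpha>) * (norm (B \<alpha>))\<^sup>2"
      by (simp only: distrib_left right_diff_distrib)
    also have "1 / (4 * mu \<alpha>) * (2 * (\<Sum>i\<in>UNIV. \<Sum>j\<in>UNIV. B \<alpha> $ i $ j * A \<alpha> $ i $ j))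
        = (\<Sum>i\<in>UNIV. \<Sum>j\<in>UNIV. B \<alpha> $ i $ j / (2 * mu \<alpha>) * A \<alpha> $ i $ j)"
      by (simp add: sum_distrib_left mult.commute)
    finally show ?thesis by (simp add: sum_negf)
  qed
  show ?thesis
    unfolding Giso_def A_def[symmetric] B_def[symmetric]
    by (simp only: Ups sum.distrib sum.cartesian_product)
qed

lemma Ck_on_spd_if_smooth:
  fixes g :: "tensor \<Rightarrow> real"
  assumes "\<exists>U. open U \<and> {X. spd X} \<subseteq> U \<and> smooth_on U g"
  shows "Ck_on k {X. spd X} g"
proof -
  obtain U where U: "open U" "{X. spd X} \<subseteq> U" "smooth_on U g" using assms by blast
  show ?thesis using Ck_on_subset[OF smooth_on_open_imp_Ck_on[OF U(1,3)] U(2)] .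
qed

lemma Ck_on_spd_Siso_alpha_nth:
  fixes g :: "tensor \<Rightarrow> real"
  assumes "\<exists>U. open U \<and> {X. spd X} \<subseteq> U \<and> smooth_on U g"
  shows "Ck_on k {X. spd X} (\<lambda>Y. Siso_alpha g Y $ i $ j)"
proof -
  obtain U where U: "open U" "{X. spd X} \<subseteq> U" "smooth_on U g" using assms by blast
  have "Ck_on k U (\<lambda>Y. frechet_derivative g (at Y) (Eij i j) + frechet_derivative g (at Y) (Eij j i))"
    using U by (intro Ck_on_add smooth_on_open_imp_Ck_on_partial Eij_in_Basis)
  moreover have "Siso_alpha g Y $ i $ j
      = frechet_derivative g (at Y) (Eij i j) + frechet_derivative g (at Y) (Eij j i)" for Y
    by (simp add: Siso_alpha_def sgrad_def)
  ultimately show ?thesis using Ck_on_subset[OF _ U(2)] by simp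
qed

lemma Ck_on_spd_Giso_parts:
  fixes m :: nat and mu :: "nat \<Rightarrow> real"
    and G :: "nat \<Rightarrow> tensor \<Rightarrow> real" and Ginf :: "tensor \<Rightarrow> real"
  assumes Gsmooth: "\<forall>\<alpha>\<in>{1..m}. \<exists>U. open U \<and> {X. spd X} \<subseteq> U \<and> smooth_on U (G \<alpha>)"
    and Ginfsmooth: "\<exists>U. open U \<and> {X. spd X} \<subseteq> U \<and> smooth_on U Ginf"
  shows "Ck_on k {X. spd X}
      (\<lambda>Y. Ginf Y + (\<Sum>\<alpha>=1..m. 1 / (4 * mu \<alpha>) * (Siso_alpha (G \<alpha>) Y \<bullet> Siso_alpha (G \<alpha>) Y)))"
    and "p \<in> {1..m} \<times> UNIV \<times> UNIV \<Longrightarrow>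
      Ck_on k {X. spd X} (\<lambda>Y. case p of (\<alpha>, i, j) \<Rightarrow> Siso_alpha (G \<alpha>) Y $ i $ j)"
proof -
  have A: "Ck_on k {X. spd X} (\<lambda>Y. Siso_alpha (G \<alpha>) Y $ i $ j)" if "\<alpha> \<in> {1..m}" for \<alpha> i j
    using Gsmooth that by (intro Ck_on_spd_Siso_alpha_nth) blast
  then show "p \<in> {1..m} \<times> UNIV \<times> UNIV \<Longrightarrow>
      Ck_on k {X. spd X} (\<lambda>Y. case p of (\<alpha>, i, j) \<Rightarrow> Siso_alpha (G \<alpha>) Y $ i $ j)"
    by (cases p) auto
  have "Ck_on k {X. spd X} (\<lambda>Y. 1 / (4 * mu \<alpha>) * (Siso_alpha (G \<alpha>) Y \<bullet> Siso_alpha (G \<alpha>) Y))"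
    if "\<alpha> \<in> {1..m}" for \<alpha>
  proof (rule Ck_on_cmult)
    have "Ck_on k {X. spd X}
        (\<lambda>Y. \<Sum>i\<in>UNIV. \<Sum>j\<in>UNIV. Siso_alpha (G \<alpha>) Y $ i $ j * Siso_alpha (G \<alpha>) Y $ i $ j)"
      using A[OF that] by (intro Ck_on_sum Ck_on_mult) auto
    then show "Ck_on k {X. spd X} (\<lambda>Y. Siso_alpha (G \<alpha>) Y \<bullet> Siso_alpha (G \<alpha>) Y)"
      by (simp add: inner_vec_def)
  qed
  then have "Ck_on k {X. spd X} (\<lambda>Y. \<Sum>\<alpha>=1..m. 1 / (4 * mu \<alpha>) * (Siso_alpha (G \<alpha>) Y \<bullet> Siso_alpha (G \<alpha>) Y))"
    by (intro Ck_on_sum) auto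
  then show "Ck_on k {X. spd X}
      (\<lambda>Y. Ginf Y + (\<Sum>\<alpha>=1..m. 1 / (4 * mu \<alpha>) * (Siso_alpha (G \<alpha>) Y \<bullet> Siso_alpha (G \<alpha>) Y)))"
    by (rule Ck_on_add[OF Ck_on_spd_if_smooth[OF Ginfsmooth]])
qed

lemma Ck_on_spd_Giso:
  fixes m :: nat and mu :: "nat \<Rightarrow> real" and S0 :: "nat \<Rightarrow> tensor"
    and G :: "nat \<Rightarrow> tensor \<Rightarrow> real" and Ginf :: "tensor \<Rightarrow> real"
  assumes Gsmooth: "\<forall>\<alpha>\<in>{1..m}. \<exists>U. open U \<and> {X. spd X} \<subseteq> U \<and> smooth_on U (G \<alpha>)"
    and Ginfsmooth: "\<exists>U. open U \<and> {X. spd X} \<subseteq> U \<and> smooth_on U Ginf"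
  shows "Ck_on k {X. spd X} (\<lambda>Y. Giso m mu S0 G Ginf Y Gam)"
  unfolding Giso_eq_lincomb
proof (rule Ck_on_add[OF Ck_on_add[OF Ck_on_spd_Giso_parts(1)[OF assms]] Ck_on_const],
    rule Ck_on_sum, simp)
  fix p :: "nat \<times> 3 \<times> 3" assume p: "p \<in> {1..m} \<times> UNIV \<times> UNIV"
  obtain \<alpha> i j where p_eq: "p = (\<alpha>, i, j)" by (cases p)
  have "Ck_on k {X. spd X} (\<lambda>Y. Siso_alpha (G \<alpha>) Y $ i $ j)"
    using Ck_on_spd_Giso_parts(2)[OF assms p] by (simp add: p_eq)
  then show "Ck_on k {X. spd X} (\<lambda>Y. case p of (\<alpha>, i, j) \<Rightarrow>
      - ((S0 \<alpha> + mu \<alpha> *\<^sub>R (Gam \<alpha> - mat 1)) $ i $ j / (2 * mu \<alpha>)) * Siso_alpha (G \<alpha>) Y $ i $ j)"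
    unfolding p_eq prod.case by (rule Ck_on_cmult)
qed

lemma abs_coefficient_le:
  fixes S0 Gam :: tensor
  assumes "norm Gam \<le> R"
  shows "\<bar>(S0 + mu *\<^sub>R (Gam - mat 1)) $ i $ j / (2 * mu)\<bar>
    \<le> (norm S0 + \<bar>mu\<bar> * (R + norm (mat 1 :: tensor))) / (2 * \<bar>mu\<bar>)"
proof -
  have "norm (Gam - mat 1) \<le> R + norm (mat 1 :: tensor)"
    using norm_triangle_ineq4[of Gam "mat 1"] assms by linarith
  then have "\<bar>mu\<bar> * norm (Gam - mat 1) \<le> \<bar>mu\<bar> * (R + norm (mat 1 :: tensor))"
    by (rule mult_left_mono) simp
  then have "norm (S0 + mu *\<^sub>R (Gam - mat 1)) \<le> norm S0 + \<bar>mu\<bar> * (R + norm (mat 1 :: tensor))"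
    using norm_triangle_ineq[of S0 "mu *\<^sub>R (Gam - mat 1)"] by simp
  then have "\<bar>(S0 + mu *\<^sub>R (Gam - mat 1)) $ i $ j\<bar> \<le> norm S0 + \<bar>mu\<bar> * (R + norm (mat 1 :: tensor))"
    using abs_tensor_nth_le_norm[of "S0 + mu *\<^sub>R (Gam - mat 1)" i j] by linarith
  then show ?thesis by (simp add: abs_mult divide_right_mono)
qed

lemma Giso_comp_Ctil_central_remainder_bound:
  fixes m :: nat and mu :: "nat \<Rightarrow> real" and S0 :: "nat \<Rightarrow> tensor"
    and G :: "nat \<Rightarrow> tensor \<Rightarrow> real" and Ginf :: "tensor \<Rightarrow> real"
  assumes Gsmooth: "\<forall>\<alpha>\<in>{1..m}. \<exists>U. open U \<and> {X. spd X} \<subseteq> U \<and> smooth_on U (G \<alpha>)"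
    and Ginfsmooth: "\<exists>U. open U \<and> {X. spd X} \<subseteq> U \<and> smooth_on U Ginf"
    and K: "compact K" "convex K" "K \<subseteq> {X. spd X}"
  shows "\<exists>B. \<forall>Gam x z. (\<forall>\<alpha>\<in>{1..m}. norm (Gam \<alpha>) \<le> R) \<longrightarrow> x - z \<in> K \<longrightarrow> x + z \<in> K \<longrightarrow>
    \<bar>central_remainder (\<lambda>X. Giso m mu S0 G Ginf (Ctil X) Gam) x z\<bar> \<le> B * norm z ^ 3"
proof -
  define I where "I = {1..m} \<times> (UNIV :: 3 set) \<times> (UNIV :: 3 set)"
  define P where "P X = Ginf (Ctil X)
    + (\<Sum>\<alpha>=1..m. 1 / (4 * mu \<alpha>) * (Siso_alpha (G \<alpha>) (Ctil X) \<bullet> Siso_alpha (G \<alpha>) (Ctil X)))" for X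
  define Q where "Q p X = (case p of (\<alpha>, i, j) \<Rightarrow> Siso_alpha (G \<alpha>) (Ctil X) $ i $ j)" for p X
  define Cb where "Cb p = (case p of (\<alpha>, i::3, j::3) \<Rightarrow>
    (norm (S0 \<alpha>) + \<bar>mu \<alpha>\<bar> * (R + norm (mat 1 :: tensor))) / (2 * \<bar>mu \<alpha>\<bar>))" for p
  have CkP: "Ck_on 3 {X. spd X} P"
    unfolding P_def by (rule Ck_on_comp_Ctil[OF Ck_on_spd_Giso_parts(1)[OF Gsmooth Ginfsmooth]])
  have CkQ: "Ck_on 3 {X. spd X} (Q p)" if "p \<in> I" for p
    unfolding Q_def using that unfolding I_def
    by (intro Ck_on_comp_Ctil[OF Ck_on_spd_Giso_parts(2)[OF Gsmooth Ginfsmooth]])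
  have "finite I" unfolding I_def by simp
  obtain B where B: "\<forall>c k x z. (\<forall>p\<in>I. \<bar>c p\<bar> \<le> Cb p) \<longrightarrow> x - z \<in> K \<longrightarrow> x + z \<in> K \<longrightarrow>
      \<bar>central_remainder (\<lambda>X. P X + (\<Sum>p\<in>I. c p * Q p X) + k) x z\<bar> \<le> B * norm z ^ 3"
    using central_remainder_lincomb_bound[where Q=Q and Cb=Cb, OF \<open>finite I\<close> CkP _ K] CkQ by blast
  show ?thesis
  proof (intro exI[of _ B] allI impI)
    fix Gam :: "nat \<Rightarrow> tensor" and x z :: tensor
    assume Gam: "\<forall>\<alpha>\<in>{1..m}. norm (Gam \<alpha>) \<le> R" and xz: "x - z \<in> K" "x + z \<in> K"
    define c where "c p = (case p of (\<alpha>, i, j) \<Rightarrow>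
      - ((S0 \<alpha> + mu \<alpha> *\<^sub>R (Gam \<alpha> - mat 1)) $ i $ j / (2 * mu \<alpha>)))" for p
    have "c p * Q p X = (case p of (\<alpha>, i, j) \<Rightarrow>
        - ((S0 \<alpha> + mu \<alpha> *\<^sub>R (Gam \<alpha> - mat 1)) $ i $ j / (2 * mu \<alpha>)) * Siso_alpha (G \<alpha>) (Ctil X) $ i $ j)"
      for p X by (cases p rule: prod_cases3) (simp add: c_def Q_def)
    then have "(\<lambda>X. Giso m mu S0 G Ginf (Ctil X) Gam) = (\<lambda>X. P X + (\<Sum>p\<in>I. c p * Q p X)
        + (\<Sum>\<alpha>=1..m. 1 / (4 * mu \<alpha>) * (norm (S0 \<alpha> + mu \<alpha> *\<^sub>R (Gam \<alpha> - mat 1)))\<^sup>2))"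
      unfolding Giso_eq_lincomb P_def I_def by (simp only:)
    moreover have "\<forall>p\<in>I. \<bar>c p\<bar> \<le> Cb p"
      using abs_coefficient_le Gam unfolding I_def c_def Cb_def by auto
    ultimately show "\<bar>central_remainder (\<lambda>X. Giso m mu S0 G Ginf (Ctil X) Gam) x z\<bar> \<le> B * norm z ^ 3"
      using B xz by simp
  qed
qed

lemma Senh2_eq_central_remainder:
  fixes m :: nat and mu :: "nat \<Rightarrow> real" and S0 :: "nat \<Rightarrow> tensor"
    and G :: "nat \<Rightarrow> tensor \<Rightarrow> real" and Ginf :: "tensor \<Rightarrow> real"
    and C :: "real \<Rightarrow> tensor" and Gam :: "nat \<Rightarrow> real \<Rightarrow> tensor"
  assumes Gsmooth: "\<forall>\<alpha>\<in>{1..m}. \<exists>U. open U \<and> {X. spd X} \<subseteq> U \<and> smooth_on U (G \<alpha>)"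
    and Ginfsmooth: "\<exists>U. open U \<and> {X. spd X} \<subseteq> U \<and> smooth_on U Ginf"
    and spd: "spd (C tn)" "spd (C (tn + dt))"
  defines "Z \<equiv> (1/2) *\<^sub>R (C (tn + dt) - C tn)"
  shows "Senh2 m mu S0 G Ginf C Gam tn dt = (if Z = 0 then 0 else
    (central_remainder (\<lambda>X. Giso m mu S0 G Ginf (Ctil X) (\<lambda>\<alpha>. (1/2) *\<^sub>R (Gam \<alpha> tn + Gam \<alpha> (tn + dt))))
      ((1/2) *\<^sub>R (C tn + C (tn + dt))) Z / (norm Z)\<^sup>2) *\<^sub>R Z)"
proof -
  define Gh where "Gh = (\<lambda>\<alpha>. (1/2) *\<^sub>R (Gam \<alpha> tn + Gam \<alpha> (tn + dt)))"
  define Ch where "Ch = (1/2) *\<^sub>R (C tn + C (tn + dt))"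
  define g where "g Y = Giso m mu S0 G Ginf Y Gh" for Y
  have Ch_Z: "Ch + Z = C (tn + dt)" "Ch - Z = C tn"
    unfolding Ch_def Z_def by (simp_all add: vec_eq_iff algebra_simps)
  have "(1/2) *\<^sub>R C tn + (1/2) *\<^sub>R C (tn + dt) \<in> {X. spd X}"
    using spd by (intro convexD[OF convex_spd]) auto
  then have "spd Ch" unfolding Ch_def by (simp add: scaleR_add_right)
  have "transpose Z = Z" using spd unfolding Z_def by (simp add: spd_def transpose_def vec_eq_iff)
  have "Ck_on (Suc 0) {X. spd X} g"
    unfolding g_def by (rule Ck_on_spd_Giso[OF Gsmooth Ginfsmooth])
  then obtain g' where "(g has_derivative g') (at (Ctil Ch))"
    using Ck_on_imp_differentiable spd_Ctil[OF \<open>spd Ch\<close>] by (metis differentiable_def mem_Collect_eq)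
  from frechet_derivative_comp_Ctil[OF \<open>spd Ch\<close> \<open>transpose Z = Z\<close> this]
  have "2 * frechet_derivative (\<lambda>X. g (Ctil X)) (at Ch) Z = ddot (Siso m mu S0 G Ginf Ch Gh) Z"
    unfolding Siso_def Let_def g_def .
  then show ?thesis
    unfolding Senh2_def Let_def central_remainder_def
    by (simp add: Z_def[symmetric] Ch_def[symmetric] Gh_def[symmetric] g_def[symmetric] tnorm_eq_norm Ch_Z)
qed

lemma norm_central_quotient_le:
  fixes z :: "'a::real_normed_vector"
  assumes "\<bar>r\<bar> \<le> B * norm z ^ 3"
  shows "norm (if z = 0 then 0 else (r / (norm z)\<^sup>2) *\<^sub>R z) \<le> B * (norm z)\<^sup>2"
proof (cases "z = 0")
  case False
  then have "norm ((r / (norm z)\<^sup>2) *\<^sub>R z) = \<bar>r\<bar> / norm z"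
    by (simp add: abs_divide power2_eq_square)
  also have "\<dots> \<le> B * norm z ^ 3 / norm z" using assms by (simp add: divide_right_mono)
  also have "\<dots> = B * (norm z)\<^sup>2" using False by (simp add: power2_eq_square power3_eq_cube)
  finally show ?thesis using False by simp
qed simp

lemma Senh2_quadratic_bound:
  fixes m :: nat and mu :: "nat \<Rightarrow> real" and S0 :: "nat \<Rightarrow> tensor"
    and G :: "nat \<Rightarrow> tensor \<Rightarrow> real" and Ginf :: "tensor \<Rightarrow> real"
    and C :: "real \<Rightarrow> tensor" and Gam :: "nat \<Rightarrow> real \<Rightarrow> tensor"
  assumes Gsmooth: "\<forall>\<alpha>\<in>{1..m}. \<exists>U. open U \<and> {X. spd X} \<subseteq> U \<and> smooth_on U (G \<alpha>)"
    and Ginfsmooth: "\<exists>U. open U \<and> {X. spd X} \<subseteq> U \<and> smooth_on U Ginf"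
    and K: "compact K" "convex K" "K \<subseteq> {X. spd X}"
  shows "\<exists>B\<ge>0. \<forall>tn dt. C tn \<in> K \<longrightarrow> C (tn + dt) \<in> K \<longrightarrow>
    (\<forall>\<alpha>\<in>{1..m}. norm (Gam \<alpha> tn) \<le> R \<and> norm (Gam \<alpha> (tn + dt)) \<le> R) \<longrightarrow>
    tnorm (Senh2 m mu S0 G Ginf C Gam tn dt) \<le> B * (norm (C (tn + dt) - C tn))\<^sup>2"
proof -
  obtain B where B: "\<forall>Gh x z. (\<forall>\<alpha>\<in>{1..m}. norm (Gh \<alpha>) \<le> R) \<longrightarrow> x - z \<in> K \<longrightarrow> x + z \<in> K \<longrightarrow>
      \<bar>central_remainder (\<lambda>X. Giso m mu S0 G Ginf (Ctil X) Gh) x z\<bar> \<le> B * norm z ^ 3"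
    using Giso_comp_Ctil_central_remainder_bound[OF Gsmooth Ginfsmooth K] by blast
  have "tnorm (Senh2 m mu S0 G Ginf C Gam tn dt) \<le> \<bar>B\<bar> / 4 * (norm (C (tn + dt) - C tn))\<^sup>2"
    if C: "C tn \<in> K" "C (tn + dt) \<in> K"
      and Gam: "\<forall>\<alpha>\<in>{1..m}. norm (Gam \<alpha> tn) \<le> R \<and> norm (Gam \<alpha> (tn + dt)) \<le> R" for tn dt
  proof -
    define Z where "Z = (1/2) *\<^sub>R (C (tn + dt) - C tn)"
    define Ch where "Ch = (1/2) *\<^sub>R (C tn + C (tn + dt))"
    define Gh where "Gh = (\<lambda>\<alpha>. (1/2) *\<^sub>R (Gam \<alpha> tn + Gam \<alpha> (tn + dt)))"
    have "Ch - Z = C tn" "Ch + Z = C (tn + dt)"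
      unfolding Ch_def Z_def by (simp_all add: vec_eq_iff algebra_simps)
    moreover have "norm (Gh \<alpha>) \<le> R" if "\<alpha> \<in> {1..m}" for \<alpha>
      using Gam that norm_triangle_ineq[of "Gam \<alpha> tn" "Gam \<alpha> (tn + dt)"] unfolding Gh_def by force
    ultimately have rem: "\<bar>central_remainder (\<lambda>X. Giso m mu S0 G Ginf (Ctil X) Gh) Ch Z\<bar> \<le> B * norm Z ^ 3"
      using B C by simp
    have spd: "spd (C tn)" "spd (C (tn + dt))" using C K(3) by auto
    have "norm (Senh2 m mu S0 G Ginf C Gam tn dt) \<le> B * (norm Z)\<^sup>2"
      unfolding Senh2_eq_central_remainder[OF Gsmooth Ginfsmooth spd]
        Z_def[symmetric] Ch_def[symmetric] Gh_def[symmetric]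
      using rem by (rule norm_central_quotient_le)
    also have "\<dots> \<le> \<bar>B\<bar> * (norm Z)\<^sup>2" by (rule mult_right_mono) auto
    finally show ?thesis by (simp add: tnorm_eq_norm Z_def power2_eq_square)
  qed
  then show ?thesis by (intro exI[of _ "\<bar>B\<bar> / 4"]) auto
qed

section \<open>The curve of deformations\<close>

lemma smooth_on_imp_continuous_on: "smooth_on U f \<Longrightarrow> continuous_on U f"
  unfolding smooth_on_def by (metis empty_subsetI empty_set)

lemma smooth_on_interval_lipschitz:
  fixes C :: "real \<Rightarrow> 'b::real_normed_vector"
  assumes "smooth_on {a..b} C"
  shows "\<exists>L\<ge>0. \<forall>s\<in>{a..b}. \<forall>t\<in>{a..b}. norm (C s - C t) \<le> L * \<bar>s - t\<bar>"
proof -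
  obtain D where D0: "D [] = C" and D: "\<forall>l. set l \<subseteq> Basis \<longrightarrow> continuous_on {a..b} (D l) \<and>
        (\<forall>x\<in>{a..b}. (D l has_derivative (\<lambda>h. \<Sum>i\<in>Basis. (h \<bullet> i) *\<^sub>R D (i # l) x)) (at x within {a..b}))"
    using assms unfolding smooth_on_def by (elim exE conjE) (rule that)
  have "continuous_on {a..b} (D [1])" using D by simp
  then have "bounded (D [1] ` {a..b})" by (rule compact_imp_bounded[OF compact_continuous_image[OF _ compact_Icc]])
  then obtain L where L: "\<forall>x\<in>{a..b}. norm (D [1] x) \<le> L" unfolding bounded_iff by auto
  have "(C has_derivative (\<lambda>h. h *\<^sub>R D [1] x)) (at x within {a..b})" if "x \<in> {a..b}" for x
    using D that D0 by auto
  moreover have "onorm (\<lambda>h. h *\<^sub>R D [1] x) \<le> max 0 L" if "x \<in> {a..b}" for x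
    using L that by (simp add: onorm_scaleR_left[OF bounded_linear_ident] onorm_id le_max_iff_disj)
  ultimately have "norm (C s - C t) \<le> max 0 L * norm (s - t)" if "s \<in> {a..b}" "t \<in> {a..b}" for s t
    by (rule differentiable_bound[OF convex_real_interval(5)]) (use that in auto)
  then show ?thesis by (intro exI[of _ "max 0 L"]) auto
qed

lemma uniform_bound_if_has_vector_derivative:
  assumes "finite A" "compact S" "\<forall>a\<in>A. \<forall>t\<in>S. (f a has_vector_derivative f' a t) (at t within S)"
  shows "\<exists>R. \<forall>a\<in>A. \<forall>t\<in>S. norm (f a t) \<le> R"
proof -
  have "continuous_on S (f a)" if "a \<in> A" for a
    unfolding continuous_on_eq_continuous_within using assms(3) that has_vector_derivative_continuous
    by blast
  then have "bounded (\<Union>a\<in>A. f a ` S)"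
    using assms(1,2) by (intro bounded_UN ballI compact_imp_bounded compact_continuous_image) auto
  then show ?thesis by (auto simp: bounded_iff)
qed

lemma convex_hull_image_spd:
  assumes "compact S" "continuous_on S C" "\<forall>t\<in>S. spd (C t)"
  shows "compact (convex hull (C ` S))" "convex (convex hull (C ` S))"
    and "convex hull (C ` S) \<subseteq> {X. spd X}"
proof -
  show "compact (convex hull (C ` S))" using assms by (intro compact_convex_hull compact_continuous_image)
  show "convex (convex hull (C ` S))" by (rule convex_convex_hull)
  show "convex hull (C ` S) \<subseteq> {X. spd X}" using assms(3) by (intro hull_minimal convex_spd) auto
qed

theorem proposition4:
  fixes m :: nat and mu eta :: "nat \<Rightarrow> real" and S0 :: "nat \<Rightarrow> tensor"
    and G :: "nat \<Rightarrow> tensor \<Rightarrow> real" and Ginf :: "tensor \<Rightarrow> real"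
    and T :: real and C :: "real \<Rightarrow> tensor" and Gam :: "nat \<Rightarrow> real \<Rightarrow> tensor"
  assumes m: "m \<ge> 1"
    and mu: "\<forall>\<alpha>\<in>{1..m}. mu \<alpha> > 0"
    and eta: "\<forall>\<alpha>\<in>{1..m}. eta \<alpha> > 0"
    and S0sym: "\<forall>\<alpha>\<in>{1..m}. transpose (S0 \<alpha>) = S0 \<alpha>"
    and Gsmooth: "\<forall>\<alpha>\<in>{1..m}. \<exists>U. open U \<and> {X. spd X} \<subseteq> U \<and> smooth_on U (G \<alpha>)"
    and Ginfsmooth: "\<exists>U. open U \<and> {X. spd X} \<subseteq> U \<and> smooth_on U Ginf"
    and T: "T > 0"
    and Csmooth: "smooth_on {0..T} C"
    and Cspd: "\<forall>t\<in>{0..T}. spd (C t)"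
    and ode: "\<forall>\<alpha>\<in>{1..m}. \<forall>t\<in>{0..T}.
       (Gam \<alpha> has_vector_derivative
          ((1 / eta \<alpha>) *\<^sub>R (Siso_alpha (G \<alpha>) (Ctil (C t)) - S0 \<alpha> - mu \<alpha> *\<^sub>R (Gam \<alpha> t - mat 1))))
       (at t within {0..T})"
    and init: "\<forall>\<alpha>\<in>{1..m}. transpose (Gam \<alpha> 0) = Gam \<alpha> 0"
  shows "\<exists>K>0. \<exists>\<delta>>0. \<forall>tn dt. 0 \<le> tn \<and> tn < T \<and> 0 < dt \<and> dt \<le> T - tn \<and> dt \<le> \<delta> \<longrightarrow>
           tnorm (Senh2 m mu S0 G Ginf C Gam tn dt) \<le> K * dt\<^sup>2"
proof -
  define H where "H = convex hull (C ` {0..T})"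
  note H = convex_hull_image_spd[OF compact_Icc smooth_on_imp_continuous_on[OF Csmooth] Cspd, folded H_def]
  obtain R where R: "\<forall>\<alpha>\<in>{1..m}. \<forall>t\<in>{0..T}. norm (Gam \<alpha> t) \<le> R"
    using uniform_bound_if_has_vector_derivative[OF finite_atLeastAtMost compact_Icc ode] by blast
  obtain B where B: "B \<ge> 0" "\<forall>tn dt. C tn \<in> H \<longrightarrow> C (tn + dt) \<in> H \<longrightarrow>
      (\<forall>\<alpha>\<in>{1..m}. norm (Gam \<alpha> tn) \<le> R \<and> norm (Gam \<alpha> (tn + dt)) \<le> R) \<longrightarrow>
      tnorm (Senh2 m mu S0 G Ginf C Gam tn dt) \<le> B * (norm (C (tn + dt) - C tn))\<^sup>2"
    using Senh2_quadratic_bound[OF Gsmooth Ginfsmooth H] by blast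
  obtain L where L: "\<forall>s\<in>{0..T}. \<forall>t\<in>{0..T}. norm (C s - C t) \<le> L * \<bar>s - t\<bar>"
    using smooth_on_interval_lipschitz[OF Csmooth] by blast
  have "tnorm (Senh2 m mu S0 G Ginf C Gam tn dt) \<le> (B * L\<^sup>2 + 1) * dt\<^sup>2"
    if "0 \<le> tn" "0 < dt" "dt \<le> T - tn" for tn dt
  proof -
    have t: "tn \<in> {0..T}" "tn + dt \<in> {0..T}" using that by auto
    then have "tnorm (Senh2 m mu S0 G Ginf C Gam tn dt) \<le> B * (norm (C (tn + dt) - C tn))\<^sup>2"
      using B(2) R unfolding H_def by (simp add: hull_inc)
    also have "\<dots> \<le> B * (L * dt)\<^sup>2"
      using L[rule_format, OF t(2,1)] that B(1) by (intro mult_left_mono power_mono) auto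
    also have "\<dots> \<le> (B * L\<^sup>2 + 1) * dt\<^sup>2" by (simp add: power_mult_distrib algebra_simps)
    finally show ?thesis .
  qed
  with B(1) show ?thesis
    by (intro exI[of _ "B * L\<^sup>2 + 1"] conjI exI[of _ "1::real"]) (auto intro: add_nonneg_pos)
qed

end
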